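(* For all $n\ge1$, $$a_{\{0101,0112\}}(n)=a_{\{0102,0112\}}(n)=a_{\{0121,0112\}}(n)=a_{\{0102,0120\}}(n)=(n-1)2^{n-2}+1.$$
   Context: An ascent in an integer sequence $s_1\cdots s_m$ is an index $j$ with $s_j<s_{j+1}$; $\mathrm{asc}$ denotes the number of ascents. An ascent sequence is a sequence $x_1\cdots x_n$ of nonnegative integers with $x_1=0$ and $x_i\le 1+\mathrm{asc}(x_1\cdots x_{i-1})$ for all $i\ge2$. The reduction $\mathrm{red}(w)$ of an integer sequence $w$ replaces the $i$-th smallest distinct letter of $w$ by $i-1$; a pattern is a reduced sequence. A sequence $x$ contains a pattern $p=p_1\cdots p_k$ if there are indices $i_1<\cdots<i_k$ with $\mathrm{red}(x_{i_1}\cdots x_{i_k})=p$; otherwise $x$ avoids $p$. For a finite set $P$ of patterns, $a_P(n)$ denotes the number of ascent sequences of length $n$ avoiding every pattern in $P$. *)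

theory Defs
  imports Main
begin

definition asc :: "nat list \<Rightarrow> nat" where
  "asc s = card {j. Suc j < length s \<and> s ! j < s ! Suc j}"

text \<open>Ascent sequences: x_1 = 0 and x_i <= 1 + asc(x_1 ... x_(i-1)) for i >= 2.
  Lists are 0-indexed, so x ! i corresponds to x_(i+1).\<close>
definition ascent_seq :: "nat list \<Rightarrow> bool" where
  "ascent_seq x \<longleftrightarrow> x \<noteq> [] \<and> x ! 0 = 0 \<and>
     (\<forall>i. 1 \<le> i \<and> i < length x \<longrightarrow> x ! i \<le> 1 + asc (take i x))"

definition red :: "nat list \<Rightarrow> nat list" where
  "red w = map (\<lambda>a. card {b \<in> set w. b < a}) w"

definition contains :: "nat list \<Rightarrow> nat list \<Rightarrow> bool" where
  "contains x p \<longleftrightarrow> (\<exists>s \<in> set (subseqs x). red s = p)"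

definition avoids :: "nat list \<Rightarrow> nat list \<Rightarrow> bool" where
  "avoids x p \<longleftrightarrow> \<not> contains x p"

definition a_count :: "nat list set \<Rightarrow> nat \<Rightarrow> nat" where
  "a_count P n = card {x. ascent_seq x \<and> length x = n \<and> (\<forall>p \<in> P. avoids x p)}"

end

theory Submission
  imports Defs
begin

text \<open>Each of the four classes is enumerated by a generating tree: appending a letter \<open>v\<close>
  to an avoider \<open>x\<close> gives an avoider iff \<open>v\<close> lies in an explicit set of children, described
  by a few statistics of \<open>x\<close> (its maximum, its last letter, whether it is weakly increasing,
  whether only \<open>0\<close> is repeated, \<dots>) together with an invariant that these children
  preserve. For \<open>{0102, 0120}\<close> and \<open>{0121, 0112}\<close> every node has two children, plus a
  third one at the \<open>2 ^ (n - 1)\<close> flagged nodes other than \<open>0 \<dots> 0\<close>; for \<open>{0102, 0112}\<close>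
  counting by the last letter gives the same recurrence \<open>a (n + 1) = 2 a n + 2 ^ (n - 1) - 1\<close>;
  for \<open>{0101, 0112}\<close> labelling each node by its number of nonzero children gives
  \<open>a (n + 1) = a n + 2 ^ (n - 1) + (n - 1) 2 ^ (n - 2)\<close>. Both recurrences are solved by
  \<open>(n - 1) 2 ^ (n - 2) + 1\<close>.\<close>

section \<open>Reduction and pattern containment\<close>

lemma subseqs_eq_map_nth:
  "s \<in> set (subseqs x) \<Longrightarrow>
    \<exists>I. sorted_wrt (<) I \<and> (\<forall>i\<in>set I. i < length x) \<and> s = map ((!) x) I"
proof (induction x arbitrary: s)
  case (Cons a x)
  then consider (hd) s' where "s = a # s'" "s' \<in> set (subseqs x)" | (tl) "s \<in> set (subseqs x)"
    by (auto simp: Let_def)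
  then show ?case
  proof cases
    case hd
    then obtain I where I: "sorted_wrt (<) I" "\<forall>i\<in>set I. i < length x" "s' = map ((!) x) I"
      using Cons.IH by blast
    show ?thesis
      by (rule exI[of _ "0 # map Suc I"]) (use I hd in \<open>auto simp: sorted_wrt_map\<close>)
  next
    case tl
    then obtain I where I: "sorted_wrt (<) I" "\<forall>i\<in>set I. i < length x" "s = map ((!) x) I"
      using Cons.IH by blast
    show ?thesis
      by (rule exI[of _ "map Suc I"]) (use I in \<open>auto simp: sorted_wrt_map\<close>)
  qed
qed simp

lemma map_nth_in_subseqs:
  "sorted_wrt (<) I \<Longrightarrow> \<forall>i\<in>set I. i < length x \<Longrightarrow> map ((!) x) I \<in> set (subseqs x)"
proof (induction x arbitrary: I)
  case Nil
  then show ?case by (cases I) auto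
next
  case (Cons a x)
  show ?case
  proof (cases I)
    case Nil
    have "[] \<in> set (subseqs y)" for y
      by (induction y) (auto simp: Let_def)
    then show ?thesis using Nil by (metis list.simps(8))
  next
    case (Cons i I')
    define J where "J = map (\<lambda>i. i - 1) I'"
    have "\<forall>j\<in>set I'. 0 < j" using Cons.prems(1) Cons by auto
    then have I': "I' = map Suc J" unfolding J_def by (induction I') auto
    have J: "sorted_wrt (<) J" "\<forall>j\<in>set J. j < length x"
      using Cons.prems Cons I' by (auto simp: sorted_wrt_map)
    show ?thesis
    proof (cases i)
      case 0
      then have "map ((!) (a # x)) I = a # map ((!) x) J" using Cons I' by simp
      then show ?thesis using Cons.IH[OF J] by (auto simp: Let_def)
    next
      case (Suc i0)
      have "map ((!) x) (i0 # J) \<in> set (subseqs x)"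
        using Cons.IH[of "i0 # J"] J Cons.prems Cons Suc I' by (auto simp: sorted_wrt_map)
      moreover have "map ((!) (a # x)) I = map ((!) x) (i0 # J)" using Cons Suc I' by simp
      ultimately show ?thesis by (auto simp: Let_def)
    qed
  qed
qed

lemma length_red [simp]: "length (red w) = length w"
  by (simp add: red_def)

lemma nth_red: "i < length w \<Longrightarrow> red w ! i = card {b \<in> set w. b < w ! i}"
  by (simp add: red_def)

lemma nth_red_less_iff:
  assumes "i < length w" "j < length w"
  shows "red w ! i < red w ! j \<longleftrightarrow> w ! i < w ! j"
proof
  assume "w ! i < w ! j"
  then have "{b \<in> set w. b < w ! i} \<subset> {b \<in> set w. b < w ! j}"
    using assms by (auto intro: nth_mem)
  then show "red w ! i < red w ! j" using assms by (simp add: nth_red psubset_card_mono)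
next
  assume "red w ! i < red w ! j"
  show "w ! i < w ! j"
  proof (rule ccontr)
    assume "\<not> w ! i < w ! j"
    then have "{b \<in> set w. b < w ! j} \<subseteq> {b \<in> set w. b < w ! i}" by auto
    then have "red w ! j \<le> red w ! i" using assms by (simp add: nth_red card_mono)
    then show False using \<open>red w ! i < red w ! j\<close> by simp
  qed
qed

lemma card_image_eq_if_same_kernel:
  assumes "\<And>a b. a \<in> A \<Longrightarrow> b \<in> A \<Longrightarrow> f a = f b \<longleftrightarrow> g a = g b"
  shows "card (f ` A) = card (g ` A)"
proof -
  define h where "h y = g (inv_into A f y)" for y
  have h: "h (f a) = g a" if "a \<in> A" for a
  proof -
    have "inv_into A f (f a) \<in> A" "f (inv_into A f (f a)) = f a"
      using that by (auto intro: inv_into_into f_inv_into_f)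
    then show ?thesis using assms that unfolding h_def by metis
  qed
  have "inj_on h (f ` A)"
    by (rule inj_onI) (use assms h in auto)
  moreover have "h ` f ` A = g ` A"
    using h by (force simp: image_image)
  ultimately show ?thesis by (metis card_image)
qed

lemma red_eqI:
  assumes len: "length v = length w"
    and iso: "\<And>i j. i < length v \<Longrightarrow> j < length v \<Longrightarrow> v ! i < v ! j \<longleftrightarrow> w ! i < w ! j"
  shows "red v = red w"
proof (rule nth_equalityI)
  fix i assume "i < length (red v)"
  then have i: "i < length v" by simp
  have same_kernel: "v ! a = v ! b \<longleftrightarrow> w ! a = w ! b" if "a < length v" "b < length v" for a b
    using iso[OF that] iso[OF that(2,1)] by (metis nat_neq_iff)
  let ?J = "{j. j < length v \<and> v ! j < v ! i}"
  have "{b \<in> set v. b < v ! i} = (!) v ` ?J" "{b \<in> set w. b < w ! i} = (!) w ` ?J"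
    using iso i len by (auto simp: in_set_conv_nth)
  moreover have "card ((!) v ` ?J) = card ((!) w ` ?J)"
    by (rule card_image_eq_if_same_kernel) (use same_kernel in auto)
  ultimately show "red v ! i = red w ! i" using i len by (simp add: nth_red)
qed (use len in simp)

lemma red_eq_iff:
  assumes "red p = p"
  shows "red w = p \<longleftrightarrow> length w = length p \<and>
     (\<forall>i<length w. \<forall>j<length w. w ! i < w ! j \<longleftrightarrow> p ! i < p ! j)"
proof
  assume "red w = p"
  then show "length w = length p \<and> (\<forall>i<length w. \<forall>j<length w. w ! i < w ! j \<longleftrightarrow> p ! i < p ! j)"
    using nth_red_less_iff by (metis length_red)
next
  assume "length w = length p \<and> (\<forall>i<length w. \<forall>j<length w. w ! i < w ! j \<longleftrightarrow> p ! i < p ! j)"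
  then have "red w = red p" by (intro red_eqI) auto
  then show "red w = p" using assms by simp
qed

lemma red_pattern:
  assumes "set p = {0..<m}"
  shows "red p = p"
proof (rule nth_equalityI)
  fix i assume "i < length (red p)"
  then have i: "i < length p" by simp
  then have "p ! i < m" using assms nth_mem by fastforce
  then have "{b \<in> set p. b < p ! i} = {0..<p ! i}" using assms by auto
  then show "red p ! i = p ! i" using i by (simp add: nth_red)
qed simp

lemma red_length4_eq_iff:
  assumes "set p = {0..<m}" "length p = 4"
  shows "red [a, b, c, d] = p \<longleftrightarrow>
    (\<forall>i<4. \<forall>j<4. [a, b, c, d] ! i < [a, b, c, d] ! j \<longleftrightarrow> p ! i < p ! j)"
  using red_eq_iff[OF red_pattern[OF assms(1)], of "[a, b, c, d]"] assms(2)
  by (simp add: numeral_eq_Suc)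

lemma red_eq_0101_iff: "red [a, b, c, d] = [0,1,0,1] \<longleftrightarrow> a < b \<and> c = a \<and> d = (b::nat)"
proof -
  have "set [0,1,0,1::nat] = {0..<2}" by auto
  from red_length4_eq_iff[OF this] show ?thesis
    by (simp add: numeral_eq_Suc All_less_Suc) linarith
qed

lemma red_eq_0102_iff: "red [a, b, c, d] = [0,1,0,2] \<longleftrightarrow> a < b \<and> c = a \<and> b < (d::nat)"
proof -
  have "set [0,1,0,2::nat] = {0..<3}" by auto
  from red_length4_eq_iff[OF this] show ?thesis
    by (simp add: numeral_eq_Suc All_less_Suc) linarith
qed

lemma red_eq_0112_iff: "red [a, b, c, d] = [0,1,1,2] \<longleftrightarrow> a < b \<and> c = b \<and> b < (d::nat)"
proof -
  have "set [0,1,1,2::nat] = {0..<3}" by auto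
  from red_length4_eq_iff[OF this] show ?thesis
    by (simp add: numeral_eq_Suc All_less_Suc) linarith
qed

lemma red_eq_0120_iff: "red [a, b, c, d] = [0,1,2,0] \<longleftrightarrow> a < b \<and> b < c \<and> d = (a::nat)"
proof -
  have "set [0,1,2,0::nat] = {0..<3}" by auto
  from red_length4_eq_iff[OF this] show ?thesis
    by (simp add: numeral_eq_Suc All_less_Suc) linarith
qed

lemma red_eq_0121_iff: "red [a, b, c, d] = [0,1,2,1] \<longleftrightarrow> a < b \<and> b < c \<and> d = (b::nat)"
proof -
  have "set [0,1,2,1::nat] = {0..<3}" by auto
  from red_length4_eq_iff[OF this] show ?thesis
    by (simp add: numeral_eq_Suc All_less_Suc) linarith
qed

lemma contains_length4_iff:
  assumes "length p = 4"
  shows "contains x p \<longleftrightarrow>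
    (\<exists>i j k l. i < j \<and> j < k \<and> k < l \<and> l < length x \<and> red [x!i, x!j, x!k, x!l] = p)"
proof
  assume "contains x p"
  then obtain s where s: "s \<in> set (subseqs x)" "red s = p" unfolding contains_def by blast
  then obtain I where I: "sorted_wrt (<) I" "\<forall>i\<in>set I. i < length x" "s = map ((!) x) I"
    using subseqs_eq_map_nth by blast
  have "length I = 4" using s(2) I(3) assms by (metis length_map length_red)
  then obtain i j k l where "I = [i, j, k, l]"
    by (auto simp: numeral_eq_Suc length_Suc_conv)
  then show "\<exists>i j k l. i < j \<and> j < k \<and> k < l \<and> l < length x \<and> red [x!i, x!j, x!k, x!l] = p"
    using I s by auto
next
  assume "\<exists>i j k l. i < j \<and> j < k \<and> k < l \<and> l < length x \<and> red [x!i, x!j, x!k, x!l] = p"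
  then obtain i j k l where h: "i < j" "j < k" "k < l" "l < length x" "red [x!i, x!j, x!k, x!l] = p"
    by blast
  have "[x!i, x!j, x!k, x!l] \<in> set (subseqs x)"
    using map_nth_in_subseqs[of "[i, j, k, l]" x] h by simp
  then show "contains x p" unfolding contains_def using h by blast
qed

definition has_triple :: "nat list \<Rightarrow> (nat \<Rightarrow> nat \<Rightarrow> nat \<Rightarrow> bool) \<Rightarrow> bool" where
  "has_triple x Q \<longleftrightarrow> (\<exists>i j k. i < j \<and> j < k \<and> k < length x \<and> Q (x!i) (x!j) (x!k))"

lemma has_tripleI:
  "i < j \<Longrightarrow> j < k \<Longrightarrow> k < length x \<Longrightarrow> Q (x!i) (x!j) (x!k) \<Longrightarrow> has_triple x Q"
  unfolding has_triple_def by blast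

lemma contains_snoc_iff:
  assumes "length p = 4"
  shows "contains (x @ [v]) p \<longleftrightarrow> contains x p \<or> has_triple x (\<lambda>a b c. red [a, b, c, v] = p)"
proof -
  have "contains (x @ [v]) p \<longleftrightarrow>
    (\<exists>i j k l. i < j \<and> j < k \<and> k < l \<and> l < Suc (length x) \<and>
       red [(x@[v])!i, (x@[v])!j, (x@[v])!k, (x@[v])!l] = p)"
    using contains_length4_iff[OF assms] by simp
  also have "\<dots> \<longleftrightarrow> (\<exists>i j k l. i < j \<and> j < k \<and> k < l \<and> l < length x \<and>
       red [x!i, x!j, x!k, x!l] = p) \<or> has_triple x (\<lambda>a b c. red [a, b, c, v] = p)"
    (is "?L \<longleftrightarrow> ?R")
  proof
    assume ?L
    then obtain i j k l where h: "i < j" "j < k" "k < l" "l < Suc (length x)"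
       "red [(x@[v])!i, (x@[v])!j, (x@[v])!k, (x@[v])!l] = p" by blast
    show ?R
    proof (cases "l < length x")
      case True
      then show ?thesis using h by (auto simp: nth_append)
    next
      case False
      then have l: "l = length x" using h by simp
      have ik: "i < length x" "j < length x" "k < length x" using h l by auto
      have "red [x!i, x!j, x!k, v] = p" using h(5) ik l by (simp add: nth_append)
      then have "has_triple x (\<lambda>a b c. red [a, b, c, v] = p)" using h ik by (intro has_tripleI[of i j k]) auto
      then show ?thesis by blast
    qed
  next
    assume ?R
    then show ?L
    proof
      assume "\<exists>i j k l. i < j \<and> j < k \<and> k < l \<and> l < length x \<and> red [x!i, x!j, x!k, x!l] = p"
      then obtain i j k l where h: "i < j" "j < k" "k < l" "l < length x" "red [x!i, x!j, x!k, x!l] = p"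
        by blast
      show ?L by (rule exI[of _ i], rule exI[of _ j], rule exI[of _ k], rule exI[of _ l]) (use h in \<open>auto simp: nth_append\<close>)
    next
      assume "has_triple x (\<lambda>a b c. red [a, b, c, v] = p)"
      then obtain i j k where h: "i < j" "j < k" "k < length x" "red [x!i, x!j, x!k, v] = p"
        unfolding has_triple_def by blast
      show ?L by (rule exI[of _ i], rule exI[of _ j], rule exI[of _ k], rule exI[of _ "length x"]) (use h in \<open>auto simp: nth_append\<close>)
    qed
  qed
  also have "\<dots> \<longleftrightarrow> contains x p \<or> has_triple x (\<lambda>a b c. red [a, b, c, v] = p)"
    using contains_length4_iff[OF assms] by simp
  finally show ?thesis .
qed

section \<open>Ascent sequences\<close>

lemma asc_snoc:
  assumes "x \<noteq> []"
  shows "asc (x @ [v]) = asc x + (if last x < v then 1 else 0)"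
proof -
  let ?n = "length x"
  have "{j. Suc j < length (x @ [v]) \<and> (x @ [v]) ! j < (x @ [v]) ! Suc j} =
        {j. Suc j < ?n \<and> x ! j < x ! Suc j} \<union> (if last x < v then {?n - 1} else {})"
    (is "?A = ?B")
  proof (intro set_eqI iffI)
    fix j assume "j \<in> ?A"
    then have j: "Suc j < Suc ?n" "(x @ [v]) ! j < (x @ [v]) ! Suc j" by auto
    show "j \<in> ?B"
    proof (cases "Suc j < ?n")
      case True
      then show ?thesis using j by (auto simp: nth_append)
    next
      case False
      then have "j = ?n - 1" "Suc j = ?n" using j by auto
      then show ?thesis using j assms by (auto simp: nth_append last_conv_nth)
    qed
  next
    fix j assume "j \<in> ?B"
    then show "j \<in> ?A" using assms
      by (auto simp: nth_append last_conv_nth split: if_splits)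
  qed
  moreover have "?n - 1 \<notin> {j. Suc j < ?n \<and> x ! j < x ! Suc j}" using assms by auto
  moreover have "finite {j. Suc j < ?n \<and> x ! j < x ! Suc j}" by (rule finite_subset[of _ "{..<?n}"]) auto
  ultimately show ?thesis unfolding asc_def by auto
qed

lemma asc_le_length: "asc x \<le> length x - 1"
proof -
  have "{j. Suc j < length x \<and> x ! j < x ! Suc j} \<subseteq> {..<length x - 1}" by auto
  then show ?thesis unfolding asc_def by (metis card_lessThan card_mono finite_lessThan)
qed

lemma ascent_seq_snoc:
  assumes "x \<noteq> []"
  shows "ascent_seq (x @ [v]) \<longleftrightarrow> ascent_seq x \<and> v \<le> 1 + asc x"
proof -
  have a: "(x @ [v]) ! 0 = x ! 0" using assms by (simp add: nth_append)
  have b: "(\<forall>i. 1 \<le> i \<and> i < length (x @ [v]) \<longrightarrow> (x @ [v]) ! i \<le> 1 + asc (take i (x @ [v])))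
     \<longleftrightarrow> (\<forall>i. 1 \<le> i \<and> i < length x \<longrightarrow> x ! i \<le> 1 + asc (take i x)) \<and> v \<le> 1 + asc x"
    (is "?L \<longleftrightarrow> ?R")
  proof
    assume L: ?L
    have "1 \<le> length x" using assms by (cases x) auto
    then have "v \<le> 1 + asc x" using L[rule_format, of "length x"]
      by (simp add: nth_append)
    moreover have "x ! i \<le> 1 + asc (take i x)" if "1 \<le> i" "i < length x" for i
      using L[rule_format, of i] that by (simp add: nth_append)
    ultimately show ?R by blast
  next
    assume R: ?R
    show ?L
    proof (intro allI impI)
      fix i assume i: "1 \<le> i \<and> i < length (x @ [v])"
      show "(x @ [v]) ! i \<le> 1 + asc (take i (x @ [v]))"
      proof (cases "i < length x")
        case True
        then show ?thesis using R i by (simp add: nth_append)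
      next
        case False
        then have "i = length x" using i by simp
        then show ?thesis using R by (simp add: nth_append)
      qed
    qed
  qed
  show ?thesis unfolding ascent_seq_def using a b assms by auto
qed

lemma ascent_seq_singleton: "ascent_seq [v] \<longleftrightarrow> v = 0"
  unfolding ascent_seq_def by auto

lemma Max_le_asc:
  assumes "ascent_seq x"
  shows "Max (set x) \<le> asc x"
  using assms
proof (induction x rule: rev_induct)
  case Nil
  then show ?case by (simp add: ascent_seq_def)
next
  case (snoc v y)
  show ?case
  proof (cases "y = []")
    case True
    then show ?thesis using snoc.prems by (simp add: ascent_seq_singleton)
  next
    case False
    then have y: "ascent_seq y" "v \<le> 1 + asc y" using snoc.prems ascent_seq_snoc by auto
    have IH: "Max (set y) \<le> asc y" using snoc.IH y by blast
    have ly: "last y \<le> Max (set y)" using False by simp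
    show ?thesis
    proof (cases "last y < v")
      case True
      then show ?thesis using IH y False ly by (auto simp: asc_snoc)
    next
      case f2: False
      then have "v \<le> Max (set y)" using ly by simp
      then have "Max (set (y @ [v])) = Max (set y)" using False by (auto simp: max_def)
      then show ?thesis using IH False f2 by (simp add: asc_snoc)
    qed
  qed
qed

section \<open>Generating trees of pattern avoiders\<close>

definition avoiders :: "nat list set \<Rightarrow> nat \<Rightarrow> nat list set" where
  "avoiders P n = {x. ascent_seq x \<and> length x = n \<and> (\<forall>p\<in>P. avoids x p)}"

lemma a_count_eq_card_avoiders: "a_count P n = card (avoiders P n)"
  unfolding a_count_def avoiders_def by simp

definition admissible :: "nat list set \<Rightarrow> nat list \<Rightarrow> nat \<Rightarrow> bool" where
  "admissible P x v \<longleftrightarrow> v \<le> 1 + asc x \<and> (\<forall>p\<in>P. \<not> has_triple x (\<lambda>a b c. red [a, b, c, v] = p))"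

lemma snoc_in_avoiders_iff:
  assumes "\<forall>p\<in>P. length p = 4" and "x \<noteq> []"
  shows "x @ [v] \<in> avoiders P (Suc n) \<longleftrightarrow> x \<in> avoiders P n \<and> admissible P x v"
proof -
  have "(\<forall>p\<in>P. \<not> contains (x @ [v]) p) \<longleftrightarrow>
     (\<forall>p\<in>P. \<not> contains x p) \<and> (\<forall>p\<in>P. \<not> has_triple x (\<lambda>a b c. red [a, b, c, v] = p))"
    using contains_snoc_iff assms(1) by blast
  then show ?thesis
    unfolding avoiders_def admissible_def avoids_def mem_Collect_eq ascent_seq_snoc[OF assms(2)]
      length_append_singleton
    by blast
qed

lemma avoiders_1:
  assumes "\<forall>p\<in>P. length p = 4"
  shows "avoiders P 1 = {[0]}"
proof -
  have "\<not> contains [0] p" if "p \<in> P" for p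
    using assms that contains_length4_iff[of p "[0]"] by simp
  moreover have "x \<in> avoiders P 1 \<Longrightarrow> x = [0]" for x
    unfolding avoiders_def by (cases x) (auto simp: ascent_seq_def)
  ultimately show ?thesis unfolding avoiders_def avoids_def by (auto simp: ascent_seq_singleton)
qed

lemma avoiders_nonempty: "x \<in> avoiders P n \<Longrightarrow> 1 \<le> n \<Longrightarrow> x \<noteq> []"
  unfolding avoiders_def by auto

lemma avoiders_Max_le: "x \<in> avoiders P n \<Longrightarrow> a \<in> set x \<Longrightarrow> a \<le> n - 1"
  unfolding avoiders_def using Max_le_asc asc_le_length
  by (metis (mono_tags, lifting) List.finite_set Max_ge le_trans mem_Collect_eq)

lemma finite_avoiders: "finite (avoiders P n)"
proof (rule finite_subset)
  show "avoiders P n \<subseteq> {x. set x \<subseteq> {..n} \<and> length x = n}"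
    using avoiders_Max_le unfolding avoiders_def by fastforce
  show "finite {x. set x \<subseteq> {..n} \<and> length x = n}"
    by (rule finite_lists_length_eq) simp
qed

text \<open>\<open>E x\<close> is the set of letters that can be appended to the avoider \<open>x\<close>; it only has
  to be correct on nodes satisfying an invariant \<open>Inv\<close> that it propagates.\<close>
locale generating_tree =
  fixes P :: "nat list set" and E :: "nat list \<Rightarrow> nat set" and Inv :: "nat list \<Rightarrow> bool"
  assumes patterns_length: "\<forall>p\<in>P. length p = 4"
    and Inv_root: "Inv [0]"
    and admissible_iff: "\<And>x n v. 1 \<le> n \<Longrightarrow> x \<in> avoiders P n \<Longrightarrow> Inv x \<Longrightarrow>
       admissible P x v \<longleftrightarrow> v \<in> E x"
    and Inv_snoc: "\<And>x n v. 1 \<le> n \<Longrightarrow> x \<in> avoiders P n \<Longrightarrow> Inv x \<Longrightarrow> v \<in> E x \<Longrightarrow> Inv (x @ [v])"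
    and finite_E: "\<And>x n. 1 \<le> n \<Longrightarrow> x \<in> avoiders P n \<Longrightarrow> Inv x \<Longrightarrow> finite (E x)"
begin

lemma Inv_avoiders: "1 \<le> n \<Longrightarrow> x \<in> avoiders P n \<Longrightarrow> Inv x"
proof (induction n arbitrary: x rule: nat_induct_at_least)
  case base
  then show ?case using avoiders_1[OF patterns_length] Inv_root by simp
next
  case (Suc n)
  then have "x \<noteq> []" by (auto simp: avoiders_def)
  then obtain y v where xy: "x = y @ [v]" by (metis rev_exhaust)
  have "length y = n" using Suc.prems xy by (simp add: avoiders_def)
  then have "y \<noteq> []" using Suc.hyps by auto
  then have y: "y \<in> avoiders P n" "admissible P y v"
    using snoc_in_avoiders_iff[OF patterns_length] Suc.prems xy by blast+
  then show ?case
    using Suc.IH Inv_snoc[OF Suc.hyps] admissible_iff[OF Suc.hyps] xy by blast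
qed

lemma snoc_in_avoiders_iff_child:
  assumes n: "1 \<le> n" and x: "x \<in> avoiders P n"
  shows "x @ [v] \<in> avoiders P (Suc n) \<longleftrightarrow> v \<in> E x"
  using snoc_in_avoiders_iff[OF patterns_length avoiders_nonempty[OF x n]] x
    admissible_iff[OF n x Inv_avoiders[OF n x]]
  by blast

lemma card_avoiders_Suc_filter:
  assumes n: "1 \<le> n"
  shows "card {y \<in> avoiders P (Suc n). Q y} = (\<Sum>x\<in>avoiders P n. card {v \<in> E x. Q (x @ [v])})"
proof -
  have "{y \<in> avoiders P (Suc n). Q y} =
      (\<Union>x\<in>avoiders P n. (\<lambda>v. x @ [v]) ` {v \<in> E x. Q (x @ [v])})"
  proof (intro set_eqI iffI)
    fix y assume y: "y \<in> {y \<in> avoiders P (Suc n). Q y}"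
    then have "y \<noteq> []" by (auto simp: avoiders_def)
    then obtain x v where xy: "y = x @ [v]" by (metis rev_exhaust)
    have "length x = n" using y xy by (simp add: avoiders_def)
    then have "x \<noteq> []" using n by auto
    then have "x \<in> avoiders P n" using snoc_in_avoiders_iff[OF patterns_length] y xy by blast
    then show "y \<in> (\<Union>x\<in>avoiders P n. (\<lambda>v. x @ [v]) ` {v \<in> E x. Q (x @ [v])})"
      using snoc_in_avoiders_iff_child[OF n] y xy by blast
  qed (use snoc_in_avoiders_iff_child[OF n] in blast)
  moreover have "card (\<Union>x\<in>avoiders P n. (\<lambda>v. x @ [v]) ` {v \<in> E x. Q (x @ [v])})
      = (\<Sum>x\<in>avoiders P n. card ((\<lambda>v. x @ [v]) ` {v \<in> E x. Q (x @ [v])}))"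
    by (rule card_UN_disjoint) (use finite_avoiders finite_E[OF n] Inv_avoiders[OF n] in auto)
  moreover have "card ((\<lambda>v. x @ [v]) ` {v \<in> E x. Q (x @ [v])}) = card {v \<in> E x. Q (x @ [v])}" for x
    by (rule card_image) (auto simp: inj_on_def)
  ultimately show ?thesis by simp
qed

lemma card_avoiders_Suc_filter_indicators:
  assumes "1 \<le> n"
    and "\<And>x. x \<in> avoiders P n \<Longrightarrow>
      card {v \<in> E x. Q (x @ [v])} = (if R x then 1 else 0) + (if R' x then 1 else 0)"
  shows "card {y \<in> avoiders P (Suc n). Q y} = card {x \<in> avoiders P n. R x} + card {x \<in> avoiders P n. R' x}"
proof -
  have "card {y \<in> avoiders P (Suc n). Q y} =
      (\<Sum>x\<in>avoiders P n. (if R x then 1 else 0) + (if R' x then 1 else 0))"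
    using card_avoiders_Suc_filter[OF assms(1)] assms(2) by simp
  also have "\<dots> = card {x \<in> avoiders P n. R x} + card {x \<in> avoiders P n. R' x}"
    using finite_avoiders by (simp add: sum.distrib sum.If_cases Int_def conj_commute)
  finally show ?thesis .
qed

lemma card_avoiders_Suc_filter_indicator:
  assumes "1 \<le> n"
    and "\<And>x. x \<in> avoiders P n \<Longrightarrow> card {v \<in> E x. Q (x @ [v])} = (if R x then 1 else 0)"
  shows "card {y \<in> avoiders P (Suc n). Q y} = card {x \<in> avoiders P n. R x}"
  using card_avoiders_Suc_filter_indicators[of n Q R "\<lambda>_. False"] assms by simp

end

definition closed_form :: "nat \<Rightarrow> nat" where
  "closed_form n = (n - 1) * 2 ^ (n - 2) + 1"

lemma int_closed_form: "1 \<le> n \<Longrightarrow> int (closed_form n) = (int n - 1) * 2 ^ (n - 2) + 1"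
  by (simp add: closed_form_def of_nat_diff)

lemma closed_form_1: "closed_form 1 = 1"
  by (simp add: closed_form_def)

lemma closed_form_Suc_doubling:
  assumes "1 \<le> n"
  shows "closed_form (Suc n) + 1 = 2 * closed_form n + 2 ^ (n - 1)"
proof (cases "n = 1")
  case False
  then obtain m where "n = Suc (Suc m)" using assms by (cases n; cases "n - 1") auto
  then show ?thesis by (simp add: closed_form_def)
qed (simp add: closed_form_def)

lemma closed_form_Suc:
  assumes "1 \<le> n"
  shows "closed_form (Suc n) + 2 ^ (n - 1) = 2 ^ n + (n - 1) * 2 ^ (n - 2) + closed_form n"
proof (cases "n = 1")
  case False
  then obtain m where "n = Suc (Suc m)" using assms by (cases n; cases "n - 1") auto
  then show ?thesis by (simp add: closed_form_def)
qed (simp add: closed_form_def)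

lemma eq_closed_form_if_doubling_recurrence:
  fixes a :: "nat \<Rightarrow> nat"
  assumes "a 1 = 1" and "\<And>n. 1 \<le> n \<Longrightarrow> a (Suc n) + 1 = 2 * a n + 2 ^ (n - 1)"
  shows "1 \<le> n \<Longrightarrow> a n = closed_form n"
proof (induction n rule: nat_induct_at_least)
  case (Suc n)
  then show ?case using assms(2)[OF Suc.hyps] closed_form_Suc_doubling[OF Suc.hyps] by simp
qed (use assms(1) closed_form_1 in simp)

lemma eq_closed_form_if_recurrence:
  fixes a :: "nat \<Rightarrow> nat"
  assumes "a 1 = 1" and "\<And>n. 1 \<le> n \<Longrightarrow> a (Suc n) + 2 ^ (n - 1) = 2 ^ n + (n - 1) * 2 ^ (n - 2) + a n"
  shows "1 \<le> n \<Longrightarrow> a n = closed_form n"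
proof (induction n rule: nat_induct_at_least)
  case (Suc n)
  then show ?case using assms(2)[OF Suc.hyps] closed_form_Suc[OF Suc.hyps] by simp
qed (use assms(1) closed_form_1 in simp)

text \<open>Since the flagged nodes of length \<open>n\<close> number \<open>2 ^ (n - 1)\<close>, these assumptions give
  the recurrence \<open>a (n + 1) = 2 a n + 2 ^ (n - 1) - 1\<close>.\<close>
locale flagged_tree = generating_tree +
  fixes flag zero :: "nat list \<Rightarrow> bool"
  assumes card_E: "\<And>x n. 1 \<le> n \<Longrightarrow> x \<in> avoiders P n \<Longrightarrow> Inv x \<Longrightarrow>
      card (E x) = (if flag x \<and> \<not> zero x then 3 else 2)"
    and card_E_flag: "\<And>x n. 1 \<le> n \<Longrightarrow> x \<in> avoiders P n \<Longrightarrow> Inv x \<Longrightarrow>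
      card {v \<in> E x. flag (x @ [v])} = (if flag x then 2 else 0)"
    and card_E_zero: "\<And>x n. 1 \<le> n \<Longrightarrow> x \<in> avoiders P n \<Longrightarrow> Inv x \<Longrightarrow>
      card {v \<in> E x. zero (x @ [v])} = (if zero x then 1 else 0)"
    and flag_if_zero: "\<And>x n. 1 \<le> n \<Longrightarrow> x \<in> avoiders P n \<Longrightarrow> Inv x \<Longrightarrow> zero x \<Longrightarrow> flag x"
    and flag_root: "flag [0]" and zero_root: "zero [0]"
begin

lemma card_zero_nodes: "1 \<le> n \<Longrightarrow> card {x \<in> avoiders P n. zero x} = 1"
proof (induction n rule: nat_induct_at_least)
  case base
  have "{x \<in> avoiders P 1. zero x} = {[0]}" using avoiders_1[OF patterns_length] zero_root by auto
  then show ?case by simp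
next
  case (Suc n)
  then show ?case
    using card_avoiders_Suc_filter_indicator card_E_zero Inv_avoiders by simp
qed

lemma card_flagged_nodes: "1 \<le> n \<Longrightarrow> card {x \<in> avoiders P n. flag x} = 2 ^ (n - 1)"
proof (induction n rule: nat_induct_at_least)
  case base
  have "{x \<in> avoiders P 1. flag x} = {[0]}" using avoiders_1[OF patterns_length] flag_root by auto
  then show ?case by simp
next
  case (Suc n)
  have "card {x \<in> avoiders P (Suc n). flag x} = (\<Sum>x\<in>avoiders P n. 2 * (if flag x then 1 else 0))"
    using card_avoiders_Suc_filter[OF Suc.hyps] card_E_flag[OF Suc.hyps] Inv_avoiders[OF Suc.hyps]
    by (auto intro: sum.cong)
  also have "\<dots> = 2 * card {x \<in> avoiders P n. flag x}"
    using finite_avoiders by (simp add: sum_distrib_left[symmetric] sum.If_cases Int_def conj_commute)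
  finally show ?case using Suc by (cases n) auto
qed

lemma card_avoiders_Suc:
  assumes n: "1 \<le> n"
  shows "card (avoiders P (Suc n)) + 1 = 2 * card (avoiders P n) + 2 ^ (n - 1)"
proof -
  have "card (avoiders P (Suc n)) = (\<Sum>x\<in>avoiders P n. card (E x))"
    using card_avoiders_Suc_filter[OF n, of "\<lambda>_. True"] by simp
  also have "\<dots> = (\<Sum>x\<in>avoiders P n. 2 + (if flag x \<and> \<not> zero x then 1 else 0))"
    using card_E[OF n] Inv_avoiders[OF n] by (intro sum.cong) auto
  also have "\<dots> = (\<Sum>x\<in>avoiders P n. 2) + (\<Sum>x\<in>avoiders P n. if flag x \<and> \<not> zero x then 1 else 0)"
    by (rule sum.distrib)
  also have "\<dots> = 2 * card (avoiders P n) + card {x \<in> avoiders P n. flag x \<and> \<not> zero x}"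
    using finite_avoiders by (simp add: sum.If_cases Int_def conj_commute)
  finally have "card (avoiders P (Suc n)) =
      2 * card (avoiders P n) + card {x \<in> avoiders P n. flag x \<and> \<not> zero x}" .
  moreover have "{x \<in> avoiders P n. flag x} =
      {x \<in> avoiders P n. flag x \<and> \<not> zero x} \<union> {x \<in> avoiders P n. zero x}"
    using flag_if_zero[OF n] Inv_avoiders[OF n] by blast
  then have "card {x \<in> avoiders P n. flag x} =
      card {x \<in> avoiders P n. flag x \<and> \<not> zero x} + card {x \<in> avoiders P n. zero x}"
    using finite_avoiders by (simp add: card_Un_disjoint disjoint_iff)
  ultimately show ?thesis using card_flagged_nodes[OF n] card_zero_nodes[OF n] by simp
qed

lemma card_avoiders_eq_closed_form: "1 \<le> n \<Longrightarrow> card (avoiders P n) = closed_form n"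
  using eq_closed_form_if_doubling_recurrence[of "\<lambda>n. card (avoiders P n)"]
    card_avoiders_Suc avoiders_1[OF patterns_length] by simp

end

section \<open>Statistics of sequences\<close>

definition max_entry :: "nat list \<Rightarrow> nat" where
  "max_entry x = Max (set x)"

lemma max_entry_snoc: "x \<noteq> [] \<Longrightarrow> max_entry (x @ [v]) = max (max_entry x) v"
  unfolding max_entry_def by (simp add: max.commute)

lemma nth_le_max_entry: "i < length x \<Longrightarrow> x ! i \<le> max_entry x"
  unfolding max_entry_def by simp

lemma last_le_max_entry: "x \<noteq> [] \<Longrightarrow> last x \<le> max_entry x"
  by (simp add: last_conv_nth nth_le_max_entry)

lemma max_entry_attained: "x \<noteq> [] \<Longrightarrow> \<exists>k<length x. x ! k = max_entry x"
  unfolding max_entry_def by (metis List.finite_set Max_in in_set_conv_nth set_empty)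

lemma max_entry_singleton [simp]: "max_entry [a] = a"
  unfolding max_entry_def by simp

lemma max_entry_le_asc: "ascent_seq x \<Longrightarrow> max_entry x \<le> asc x"
  unfolding max_entry_def by (rule Max_le_asc)

lemma avoiders_last_le: "x \<in> avoiders P n \<Longrightarrow> 1 \<le> n \<Longrightarrow> last x \<le> n - 1"
  using avoiders_Max_le avoiders_nonempty last_in_set by blast

lemma le_last_if_sorted:
  assumes "sorted x" "a \<in> set x"
  shows "a \<le> last x"
proof -
  obtain i where "i < length x" "a = x ! i" using assms(2) by (auto simp: in_set_conv_nth)
  then show ?thesis using sorted_nth_mono[OF assms(1), of i "length x - 1"] by (cases "x = []") (auto simp: last_conv_nth)
qed

lemma sorted_snoc_iff: "x \<noteq> [] \<Longrightarrow> sorted (x @ [v]) \<longleftrightarrow> sorted x \<and> last x \<le> v"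
  by (auto simp: sorted_append dest: le_last_if_sorted)

lemma sorted_last_eq_max_entry: "sorted x \<Longrightarrow> x \<noteq> [] \<Longrightarrow> last x = max_entry x"
  unfolding max_entry_def by (intro Max_eqI[symmetric]) (auto simp: le_last_if_sorted)

lemma sorted_if_max_entry_0: "max_entry x = 0 \<Longrightarrow> sorted x"
  using nth_le_max_entry[of _ x] by (auto simp: sorted_iff_nth_mono)

definition only_zero_repeats :: "nat list \<Rightarrow> bool" where
  "only_zero_repeats x \<longleftrightarrow> (\<forall>j k. j < k \<and> k < length x \<and> x ! j = x ! k \<longrightarrow> x ! j = 0)"

lemma only_zero_repeats_snoc_iff: "only_zero_repeats (x @ [v]) \<longleftrightarrow> only_zero_repeats x \<and> (v = 0 \<or> (\<forall>j<length x. x ! j \<noteq> v))"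
proof
  assume r: "only_zero_repeats (x @ [v])"
  have "only_zero_repeats x" unfolding only_zero_repeats_def
  proof (intro allI impI)
    fix j k assume "j < k \<and> k < length x \<and> x ! j = x ! k"
    then show "x ! j = 0" using r[unfolded only_zero_repeats_def, rule_format, of j k] by (simp add: nth_append)
  qed
  moreover have "v = 0 \<or> (\<forall>j<length x. x ! j \<noteq> v)"
  proof (rule ccontr)
    assume "\<not> (v = 0 \<or> (\<forall>j<length x. x ! j \<noteq> v))"
    then obtain j where j: "j < length x" "x ! j = v" "v \<noteq> 0" by blast
    then show False using r[unfolded only_zero_repeats_def, rule_format, of j "length x"] by (simp add: nth_append)
  qed
  ultimately show "only_zero_repeats x \<and> (v = 0 \<or> (\<forall>j<length x. x ! j \<noteq> v))" by blast
next
  assume h: "only_zero_repeats x \<and> (v = 0 \<or> (\<forall>j<length x. x ! j \<noteq> v))"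
  show "only_zero_repeats (x @ [v])" unfolding only_zero_repeats_def
  proof (intro allI impI)
    fix j k assume jk: "j < k \<and> k < length (x @ [v]) \<and> (x @ [v]) ! j = (x @ [v]) ! k"
    show "(x @ [v]) ! j = 0"
    proof (cases "k < length x")
      case True
      have j: "j < length x" using jk True by simp
      have "x ! j = x ! k" using jk True j by (simp add: nth_append)
      then have "x ! j = 0" using h jk True unfolding only_zero_repeats_def by blast
      then show ?thesis using j by (simp add: nth_append)
    next
      case False
      then have k: "k = length x" using jk by simp
      have j: "j < length x" using jk k by simp
      have "x ! j = v" using jk k j by (simp add: nth_append)
      then show ?thesis using h j by (auto simp: nth_append)
    qed
  qed
qed

lemma only_zero_repeats_if_max_entry_0: "max_entry x = 0 \<Longrightarrow> only_zero_repeats x"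
  using nth_le_max_entry[of _ x] by (auto simp: only_zero_repeats_def)

lemma only_zero_repeats_singleton: "only_zero_repeats [a]"
  by (simp add: only_zero_repeats_def)

definition predecessor_earlier :: "nat list \<Rightarrow> bool" where
  "predecessor_earlier x \<longleftrightarrow> (\<forall>l<length x. 0 < x ! l \<longrightarrow> (\<exists>j<l. x ! j + 1 = x ! l))"

lemma predecessor_earlier_occurs_before:
  assumes "predecessor_earlier x"
  shows "l < length x \<Longrightarrow> u < x ! l \<Longrightarrow> \<exists>i<l. x ! i = u"
proof (induction l rule: less_induct)
  case (less l)
  have "0 < x ! l" using less.prems(2) by linarith
  then obtain j where j: "j < l" "x ! j + 1 = x ! l"
    using assms less.prems(1) unfolding predecessor_earlier_def by blast
  show ?case
  proof (cases "u = x ! j")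
    case False
    then obtain i where "i < j" "x ! i = u" using less.IH[of j] j less.prems by auto
    then show ?thesis using j less_trans by blast
  qed (use j in blast)
qed

lemma predecessor_earlier_occurs:
  assumes "predecessor_earlier x" "x \<noteq> []" "u \<le> max_entry x"
  shows "\<exists>i<length x. x ! i = u"
proof -
  obtain k where k: "k < length x" "x ! k = max_entry x" using max_entry_attained[OF assms(2)] by blast
  show ?thesis
  proof (cases "u = max_entry x")
    case False
    then obtain i where "i < k" "x ! i = u"
      using predecessor_earlier_occurs_before[OF assms(1) k(1), of u] k assms(3) by auto
    then show ?thesis using k less_trans by blast
  qed (use k in blast)
qed

lemma predecessor_earlier_snoc:
  assumes "predecessor_earlier x" "x \<noteq> []" "v \<le> max_entry x + 1"
  shows "predecessor_earlier (x @ [v])"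
  unfolding predecessor_earlier_def
proof (intro allI impI)
  fix l assume l: "l < length (x @ [v])" "0 < (x @ [v]) ! l"
  show "\<exists>j<l. (x @ [v]) ! j + 1 = (x @ [v]) ! l"
  proof (cases "l < length x")
    case True
    then have "0 < x ! l" using l(2) by (simp add: nth_append)
    then obtain j where j: "j < l" "x ! j + 1 = x ! l"
      using assms(1) True unfolding predecessor_earlier_def by blast
    then have "(x @ [v]) ! j + 1 = (x @ [v]) ! l" using True by (simp add: nth_append)
    then show ?thesis using j by blast
  next
    case False
    then have "l = length x" using l by simp
    then have l': "l = length x" "0 < v" using l by auto
    have "v - 1 \<le> max_entry x" using assms(3) by simp
    then obtain i where i: "i < length x" "x ! i = v - 1"
      using predecessor_earlier_occurs[OF assms(1,2)] by blast
    then have "(x @ [v]) ! i + 1 = (x @ [v]) ! l" using l' by (simp add: nth_append)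
    then show ?thesis using i l' by blast
  qed
qed

section \<open>The class \<open>{0102, 0120}\<close>\<close>

abbreviation PD :: "nat list set" where "PD \<equiv> {[0,1,0,2], [0,1,2,0]}"

definition inv_D :: "nat list \<Rightarrow> bool" where
  "inv_D x \<longleftrightarrow> x \<noteq> [] \<and>
    (\<forall>j l. j < l \<and> l < length x \<and> x ! l < x ! j \<longrightarrow> x ! j = max_entry x \<and> x ! l + 1 = max_entry x) \<and>
    predecessor_earlier x \<and>
    (sorted x \<longrightarrow> asc x \<le> max_entry x)"

definition children_D :: "nat list \<Rightarrow> nat set" where
  "children_D x = {max_entry x - 1, max_entry x} \<union> (if sorted x then {max_entry x + 1} else {})"

lemma admissible_PD_iff:
  "admissible PD x v \<longleftrightarrow> v \<le> 1 + asc x \<and>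
     \<not> has_triple x (\<lambda>a b c. a < b \<and> c = a \<and> b < v) \<and> \<not> has_triple x (\<lambda>a b c. a < b \<and> b < c \<and> v = a)"
  unfolding admissible_def by (simp only: ball_simps red_eq_0102_iff red_eq_0120_iff simp_thms)

lemma admissible_PD_imp_children_D:
  assumes I: "inv_D x" and h: "admissible PD x v"
  shows "v \<in> children_D x"
proof (rule ccontr)
  let ?M = "max_entry x"
  assume nv: "v \<notin> children_D x"
  have xne: "x \<noteq> []"
    and descent_to_max: "\<And>j l. j < l \<Longrightarrow> l < length x \<Longrightarrow> x ! l < x ! j \<Longrightarrow> x ! j = ?M \<and> x ! l + 1 = ?M"
    and pred_earlier: "predecessor_earlier x" and asc_le_max: "sorted x \<Longrightarrow> asc x \<le> ?M"
    using I unfolding inv_D_def by blast+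
  consider (lo) "v + 1 < ?M" | (hi) "?M < v" | (mid) "?M \<le> v + 1 \<and> v \<le> ?M" by linarith
  then show False
  proof cases
    case lo
    obtain k where k: "k < length x" "x ! k = ?M" using max_entry_attained[OF xne] by blast
    obtain j where j: "j < k" "x ! j = v + 1" using predecessor_earlier_occurs_before[OF pred_earlier k(1), of "v+1"] k lo by auto
    obtain i where i: "i < j" "x ! i = v" using predecessor_earlier_occurs_before[OF pred_earlier, of j v] j k by auto
    have "has_triple x (\<lambda>a b c. a < b \<and> b < c \<and> v = a)"
      by (rule has_tripleI[of i j k]) (use i j k lo in auto)
    then show False using h unfolding admissible_PD_iff by blast
  next
    case hi
    show False
    proof (cases "sorted x")
      case True
      then have "v = ?M + 1" using hi h asc_le_max unfolding admissible_PD_iff by linarith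
      then show False using nv True unfolding children_D_def by simp
    next
      case False
      then obtain j l where jl: "j < l" "l < length x" "x ! l < x ! j"
        unfolding sorted_iff_nth_mono_less by auto
      have e: "x ! j = ?M" "x ! l + 1 = ?M" using descent_to_max[OF jl] by auto
      obtain i where i: "i < j" "x ! i = x ! l"
        using predecessor_earlier_occurs_before[OF pred_earlier, of j "x ! l"] jl by auto
      have "has_triple x (\<lambda>a b c. a < b \<and> c = a \<and> b < v)"
        by (rule has_tripleI[of i j l]) (use i jl e hi in auto)
      then show False using h unfolding admissible_PD_iff by blast
    qed
  next
    case mid
    then show False using nv unfolding children_D_def by auto
  qed
qed

lemma children_D_admissible:
  assumes x: "ascent_seq x" and I: "inv_D x" and v: "v \<in> children_D x"
  shows "admissible PD x v"
  unfolding admissible_PD_iff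
proof (intro conjI notI)
  let ?M = "max_entry x"
  have descent_to_max: "\<And>j l. j < l \<Longrightarrow> l < length x \<Longrightarrow> x ! l < x ! j \<Longrightarrow> x ! j = ?M"
    using I unfolding inv_D_def by blast
  have vM: "?M \<le> v + 1" "v \<le> ?M + 1" and vs: "v = ?M + 1 \<Longrightarrow> sorted x"
    using v unfolding children_D_def by (auto split: if_splits)
  show "v \<le> 1 + asc x" using vM max_entry_le_asc[OF x] by linarith
  assume "has_triple x (\<lambda>a b c. a < b \<and> c = a \<and> b < v)"
  then obtain i j k where ijk: "i < j" "j < k" "k < length x" "x ! i < x ! j" "x ! k = x ! i" "x ! j < v"
    unfolding has_triple_def by blast
  have "x ! j = ?M" using descent_to_max[of j k] ijk by auto
  then have "sorted x" using ijk vM vs by linarith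
  then have "x ! j \<le> x ! k" using ijk sorted_nth_mono[of x j k] by simp
  then show False using ijk by simp
next
  let ?M = "max_entry x"
  have vM: "?M \<le> v + 1" using v unfolding children_D_def by (auto split: if_splits)
  assume "has_triple x (\<lambda>a b c. a < b \<and> b < c \<and> v = a)"
  then obtain i j k where ijk: "i < j" "j < k" "k < length x" "x ! i < x ! j" "x ! j < x ! k" "v = x ! i"
    unfolding has_triple_def by blast
  have "x ! k \<le> ?M" using nth_le_max_entry ijk by blast
  then show False using ijk vM by linarith
qed

lemma inv_D_snoc:
  assumes I: "inv_D x" and v: "v \<in> children_D x"
  shows "inv_D (x @ [v])"
proof -
  let ?M = "max_entry x" and ?y = "x @ [v]"
  have xne: "x \<noteq> []"
    and descent_to_max: "\<And>j l. j < l \<Longrightarrow> l < length x \<Longrightarrow> x ! l < x ! j \<Longrightarrow> x ! j = ?M \<and> x ! l + 1 = ?M"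
    and pred_earlier: "predecessor_earlier x" and asc_le_max: "sorted x \<Longrightarrow> asc x \<le> ?M"
    using I unfolding inv_D_def by blast+
  have vM: "?M \<le> v + 1" "v \<le> ?M + 1" and vs: "v = ?M + 1 \<Longrightarrow> sorted x"
    using v unfolding children_D_def by (auto split: if_splits)
  have M': "max_entry ?y = max ?M v" using max_entry_snoc[OF xne] .
  have descents: "?y ! j = max_entry ?y \<and> ?y ! l + 1 = max_entry ?y"
    if jl: "j < l" "l < length ?y" "?y ! l < ?y ! j" for j l
  proof (cases "l < length x")
    case True
    then have h: "x ! l < x ! j" using jl by (simp add: nth_append)
    have "\<not> sorted x" using h jl(1) True sorted_nth_mono[of x j l] by linarith
    then have "v \<le> ?M" using vs vM by linarith
    then show ?thesis using descent_to_max[OF jl(1) True h] jl True M' by (simp add: nth_append max_def)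
  next
    case False
    then have l: "l = length x" and jx: "j < length x" using jl by auto
    have "v < x ! j" using jl l jx by (simp add: nth_append)
    moreover have "x ! j \<le> ?M" using nth_le_max_entry[OF jx] .
    ultimately have "x ! j = ?M" "v + 1 = ?M" using vM by linarith+
    then show ?thesis using l jx M' by (simp add: nth_append max_def)
  qed
  have "asc ?y \<le> max_entry ?y" if s: "sorted ?y"
  proof -
    have sx: "sorted x" "last x \<le> v" using s sorted_snoc_iff[OF xne] by auto
    have "last x < v \<Longrightarrow> v = ?M + 1" using sorted_last_eq_max_entry[OF sx(1) xne] vM by linarith
    then show ?thesis using asc_snoc[OF xne, of v] asc_le_max[OF sx(1)] M' by auto
  qed
  then show ?thesis
    unfolding inv_D_def using descents predecessor_earlier_snoc[OF pred_earlier xne vM(2)] by blast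
qed

lemma card_children_D: "card (children_D x) = (if sorted x \<and> max_entry x \<noteq> 0 then 3 else 2)"
proof (cases "max_entry x")
  case 0
  then have "children_D x = {0, 1}" using sorted_if_max_entry_0[of x] unfolding children_D_def by auto
  then show ?thesis using 0 by simp
next
  case (Suc m)
  then show ?thesis unfolding children_D_def by auto
qed

interpretation D: flagged_tree PD children_D inv_D sorted "\<lambda>x. max_entry x = 0"
proof
  show "\<forall>p\<in>PD. length p = 4" by simp
  show "inv_D [0]" by (simp add: inv_D_def asc_def predecessor_earlier_def)
  show "sorted [0]" by simp
  show "max_entry [0] = 0" by simp
next
  fix x n v assume "1 \<le> n" "x \<in> avoiders PD n" "inv_D x"
  then show "admissible PD x v \<longleftrightarrow> v \<in> children_D x"
    using admissible_PD_imp_children_D children_D_admissible unfolding avoiders_def by blast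
next
  fix x n v assume "1 \<le> n" "x \<in> avoiders PD n" "inv_D x" "v \<in> children_D x"
  then show "inv_D (x @ [v])" using inv_D_snoc by blast
next
  fix x n assume "1 \<le> n" "x \<in> avoiders PD n" "inv_D x"
  show "finite (children_D x)" unfolding children_D_def by simp
  show "card (children_D x) = (if sorted x \<and> \<not> max_entry x = 0 then 3 else 2)"
    by (rule card_children_D)
  have xne: "x \<noteq> []" using \<open>inv_D x\<close> unfolding inv_D_def by blast
  show "card {v \<in> children_D x. sorted (x @ [v])} = (if sorted x then 2 else 0)"
  proof (cases "sorted x")
    case True
    then have "sorted (x @ [v]) \<longleftrightarrow> max_entry x \<le> v" for v
      using sorted_snoc_iff[OF xne] sorted_last_eq_max_entry[OF True xne] by simp
    then have "{v \<in> children_D x. sorted (x @ [v])} = {v \<in> children_D x. max_entry x \<le> v}"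
      by simp
    also have "\<dots> = {max_entry x, max_entry x + 1}" unfolding children_D_def using True by auto
    finally have "{v \<in> children_D x. sorted (x @ [v])} = {max_entry x, max_entry x + 1}" .
    then show ?thesis using True by simp
  qed (simp add: sorted_snoc_iff[OF xne])
  show "card {v \<in> children_D x. max_entry (x @ [v]) = 0} = (if max_entry x = 0 then 1 else 0)"
  proof (cases "max_entry x = 0")
    case True
    then have "{v \<in> children_D x. max_entry (x @ [v]) = 0} = {0}"
      using max_entry_snoc[OF xne] unfolding children_D_def by auto
    then show ?thesis using True by simp
  qed (simp add: max_entry_snoc[OF xne])
next
  fix x n assume "max_entry x = 0"
  then show "sorted x" by (rule sorted_if_max_entry_0)
qed

section \<open>The class \<open>{0121, 0112}\<close>\<close>

abbreviation PC :: "nat list set" where "PC \<equiv> {[0,1,2,1], [0,1,1,2]}"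

definition followed_by_larger :: "nat list \<Rightarrow> bool" where
  "followed_by_larger x \<longleftrightarrow>
    (\<forall>u. 0 < u \<and> u < max_entry x \<longrightarrow> (\<exists>j k. j < k \<and> k < length x \<and> x ! j = u \<and> u < x ! k))"

lemma followed_by_larger_snoc:
  assumes "followed_by_larger x" "x \<noteq> []" "v \<le> max_entry x + 1"
  shows "followed_by_larger (x @ [v])"
  unfolding followed_by_larger_def
proof (intro allI impI)
  let ?M = "max_entry x" and ?y = "x @ [v]"
  fix u assume u: "0 < u \<and> u < max_entry ?y"
  have old: "\<exists>j k. j < k \<and> k < length ?y \<and> ?y ! j = u \<and> u < ?y ! k" if "u < ?M"
  proof -
    have "0 < u" using u by simp
    then have "\<exists>j k. j < k \<and> k < length x \<and> x ! j = u \<and> u < x ! k"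
      using assms(1) that unfolding followed_by_larger_def by simp
    then obtain j k where "j < k" "k < length x" "x ! j = u" "u < x ! k" by blast
    then have "?y ! j = u" "u < ?y ! k" by (simp_all add: nth_append)
    then show ?thesis using \<open>j < k\<close> \<open>k < length x\<close> by (intro exI[of _ j] exI[of _ k]) simp
  qed
  show "\<exists>j k. j < k \<and> k < length ?y \<and> ?y ! j = u \<and> u < ?y ! k"
  proof (cases "u < ?M")
    case False
    have "u < max ?M v" using u max_entry_snoc[OF assms(2)] by simp
    then have uv: "u = ?M" "v = ?M + 1" using False assms(3) by (simp_all add: max_def split: if_splits)
    obtain j where j: "j < length x" "x ! j = ?M" using max_entry_attained[OF assms(2)] by blast
    have "?y ! j = u" using j uv(1) by (simp add: nth_append)
    moreover have "u < ?y ! length x" using uv by simp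
    ultimately show ?thesis using j(1) by (intro exI[of _ j] exI[of _ "length x"]) simp
  qed (rule old)
qed

definition inv_C :: "nat list \<Rightarrow> bool" where
  "inv_C x \<longleftrightarrow> x \<noteq> [] \<and> x ! 0 = 0 \<and> followed_by_larger x \<and>
    (\<forall>j k. j < k \<and> k < length x \<and> x ! j = x ! k \<and> 0 < x ! j \<longrightarrow> x ! j = max_entry x) \<and>
    (only_zero_repeats x \<longrightarrow> asc x \<le> max_entry x)"

definition children_C :: "nat list \<Rightarrow> nat set" where
  "children_C x = {0, max_entry x} \<union> (if only_zero_repeats x then {max_entry x + 1} else {})"

lemma admissible_PC_iff:
  "admissible PC x v \<longleftrightarrow> v \<le> 1 + asc x \<and>
     \<not> has_triple x (\<lambda>a b c. a < b \<and> b < c \<and> v = b) \<and> \<not> has_triple x (\<lambda>a b c. a < b \<and> c = b \<and> b < v)"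
  unfolding admissible_def by (simp only: ball_simps red_eq_0121_iff red_eq_0112_iff simp_thms)

lemma admissible_PC_imp_children_C:
  assumes I: "inv_C x" and h: "admissible PC x v"
  shows "v \<in> children_C x"
proof (rule ccontr)
  let ?M = "max_entry x"
  assume nv: "v \<notin> children_C x"
  then have v0: "v \<noteq> 0" "v \<noteq> ?M" unfolding children_C_def by auto
  have x0: "x ! 0 = 0" and followed: "followed_by_larger x" and asc_le_max: "only_zero_repeats x \<Longrightarrow> asc x \<le> ?M"
    using I unfolding inv_C_def by blast+
  consider (lo) "v < ?M" | (hi) "?M < v" using v0 by linarith
  then show False
  proof cases
    case lo
    obtain j k where jk: "j < k" "k < length x" "x ! j = v" "v < x ! k"
      using followed lo v0 unfolding followed_by_larger_def by blast
    have "0 < j" using jk x0 v0 by (cases j) auto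
    have "has_triple x (\<lambda>a b c. a < b \<and> b < c \<and> v = b)"
      by (rule has_tripleI[of 0 j k]) (use jk x0 v0 \<open>0 < j\<close> in auto)
    then show False using h unfolding admissible_PC_iff by blast
  next
    case hi
    show False
    proof (cases "only_zero_repeats x")
      case True
      then have "v = ?M + 1" using hi h asc_le_max unfolding admissible_PC_iff by linarith
      then show False using nv True unfolding children_C_def by simp
    next
      case False
      then obtain j k where jk: "j < k" "k < length x" "x ! j = x ! k" "x ! j \<noteq> 0"
        unfolding only_zero_repeats_def by blast
      have "0 < j" using jk x0 by (cases j) auto
      have "x ! j \<le> ?M" using nth_le_max_entry jk by (meson less_trans)
      have "has_triple x (\<lambda>a b c. a < b \<and> c = b \<and> b < v)"
        by (rule has_tripleI[of 0 j k]) (use jk x0 \<open>0 < j\<close> \<open>x ! j \<le> ?M\<close> hi in auto)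
      then show False using h unfolding admissible_PC_iff by blast
    qed
  qed
qed

lemma children_C_admissible:
  assumes x: "ascent_seq x" and I: "inv_C x" and v: "v \<in> children_C x"
  shows "admissible PC x v"
  unfolding admissible_PC_iff
proof (intro conjI notI)
  let ?M = "max_entry x"
  have vM: "v = 0 \<or> v = ?M \<or> (v = ?M + 1 \<and> only_zero_repeats x)"
    using v unfolding children_C_def by (auto split: if_splits)
  show "v \<le> 1 + asc x" using vM max_entry_le_asc[OF x] by auto
next
  let ?M = "max_entry x"
  have vM: "v = 0 \<or> v = ?M \<or> v = ?M + 1" using v unfolding children_C_def by (auto split: if_splits)
  assume "has_triple x (\<lambda>a b c. a < b \<and> b < c \<and> v = b)"
  then obtain i j k where ijk: "i < j" "j < k" "k < length x" "x ! i < x ! j" "x ! j < x ! k" "v = x ! j"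
    unfolding has_triple_def by blast
  have "x ! k \<le> ?M" using nth_le_max_entry ijk by blast
  then show False using ijk vM by auto
next
  let ?M = "max_entry x"
  have repeat_is_max: "\<And>j k. j < k \<Longrightarrow> k < length x \<Longrightarrow> x ! j = x ! k \<Longrightarrow> 0 < x ! j \<Longrightarrow> x ! j = ?M"
    using I unfolding inv_C_def by blast
  have vM: "v = 0 \<or> v = ?M \<or> (v = ?M + 1 \<and> only_zero_repeats x)"
    using v unfolding children_C_def by (auto split: if_splits)
  assume "has_triple x (\<lambda>a b c. a < b \<and> c = b \<and> b < v)"
  then obtain i j k where ijk: "i < j" "j < k" "k < length x" "x ! i < x ! j" "x ! k = x ! j" "x ! j < v"
    unfolding has_triple_def by blast
  have "x ! j = ?M" using repeat_is_max[of j k] ijk by auto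
  then have "only_zero_repeats x" using vM ijk by auto
  then have "x ! j = 0" using ijk unfolding only_zero_repeats_def by (metis less_trans)
  then show False using ijk by simp
qed

lemma inv_C_snoc:
  assumes I: "inv_C x" and v: "v \<in> children_C x"
  shows "inv_C (x @ [v])"
proof -
  let ?M = "max_entry x" and ?y = "x @ [v]"
  have xne: "x \<noteq> []" and x0: "x ! 0 = 0" and followed: "followed_by_larger x"
    and repeat_is_max: "\<And>j k. j < k \<Longrightarrow> k < length x \<Longrightarrow> x ! j = x ! k \<Longrightarrow> 0 < x ! j \<Longrightarrow> x ! j = ?M"
    and asc_le_max: "only_zero_repeats x \<Longrightarrow> asc x \<le> ?M"
    using I unfolding inv_C_def by blast+
  have vM: "v = 0 \<or> v = ?M \<or> (v = ?M + 1 \<and> only_zero_repeats x)"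
    using v unfolding children_C_def by (auto split: if_splits)
  have M': "max_entry ?y = max ?M v" using max_entry_snoc[OF xne] .
  have repeats: "?y ! j = max_entry ?y" if jk: "j < k" "k < length ?y" "?y ! j = ?y ! k" "0 < ?y ! j" for j k
  proof (cases "k < length x")
    case True
    have e: "?y ! j = x ! j" "?y ! k = x ! k" using jk True by (simp_all add: nth_append)
    then have "x ! j = ?M" using repeat_is_max[of j k] jk True by simp
    moreover have "\<not> only_zero_repeats x"
      using jk True e unfolding only_zero_repeats_def by auto
    ultimately show ?thesis using e M' vM by auto
  next
    case False
    then have k: "k = length x" and j: "j < length x" using jk by auto
    then have "x ! j = v" using jk by (simp add: nth_append)
    moreover have "x ! j \<le> ?M" using nth_le_max_entry[OF j] .
    ultimately show ?thesis using vM jk j M' by (auto simp: nth_append)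
  qed
  have "asc ?y \<le> max_entry ?y" if r: "only_zero_repeats ?y"
  proof -
    have "only_zero_repeats x" "v = 0 \<or> (\<forall>j<length x. x ! j \<noteq> v)"
      using r only_zero_repeats_snoc_iff by auto
    then have "v = 0 \<or> v = ?M + 1" using vM max_entry_attained[OF xne] by metis
    then show ?thesis using asc_snoc[OF xne, of v] asc_le_max \<open>only_zero_repeats x\<close> M' by auto
  qed
  moreover have "?y ! 0 = 0" using xne x0 by (simp add: nth_append)
  moreover have "v \<le> ?M + 1" using vM by auto
  ultimately show ?thesis
    unfolding inv_C_def using repeats followed_by_larger_snoc[OF followed xne] by blast
qed

lemma card_children_C:
  "card (children_C x) = (if only_zero_repeats x \<and> max_entry x \<noteq> 0 then 3 else 2)"
proof (cases "max_entry x")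
  case 0
  then have "children_C x = {0, 1}"
    using only_zero_repeats_if_max_entry_0[of x] unfolding children_C_def by auto
  then show ?thesis using 0 by simp
next
  case (Suc m)
  then show ?thesis unfolding children_C_def by auto
qed

interpretation C: flagged_tree PC children_C inv_C only_zero_repeats "\<lambda>x. max_entry x = 0"
proof
  show "\<forall>p\<in>PC. length p = 4" by simp
  show "inv_C [0]" by (simp add: inv_C_def asc_def followed_by_larger_def)
  show "only_zero_repeats [0]" by (rule only_zero_repeats_singleton)
  show "max_entry [0] = 0" by simp
next
  fix x n v assume "1 \<le> n" "x \<in> avoiders PC n" "inv_C x"
  then show "admissible PC x v \<longleftrightarrow> v \<in> children_C x"
    using admissible_PC_imp_children_C children_C_admissible unfolding avoiders_def by blast
next
  fix x n v assume "1 \<le> n" "x \<in> avoiders PC n" "inv_C x" "v \<in> children_C x"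
  then show "inv_C (x @ [v])" using inv_C_snoc by blast
next
  fix x n assume "1 \<le> n" "x \<in> avoiders PC n" "inv_C x"
  show "finite (children_C x)" unfolding children_C_def by simp
  show "card (children_C x) = (if only_zero_repeats x \<and> \<not> max_entry x = 0 then 3 else 2)"
    by (rule card_children_C)
  have xne: "x \<noteq> []" using \<open>inv_C x\<close> unfolding inv_C_def by blast
  show "card {v \<in> children_C x. only_zero_repeats (x @ [v])} = (if only_zero_repeats x then 2 else 0)"
  proof (cases "only_zero_repeats x")
    case True
    have "{v \<in> children_C x. only_zero_repeats (x @ [v])} = {0, max_entry x + 1}"
    proof (intro set_eqI iffI)
      fix v assume "v \<in> {v \<in> children_C x. only_zero_repeats (x @ [v])}"
      then have v: "v \<in> children_C x" "only_zero_repeats (x @ [v])" by auto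
      have "v \<noteq> max_entry x \<or> v = 0"
        using v(2) only_zero_repeats_snoc_iff[of x v] max_entry_attained[OF xne] by metis
      then show "v \<in> {0, max_entry x + 1}" using v(1) True unfolding children_C_def by auto
    next
      fix v assume v: "v \<in> {0, max_entry x + 1}"
      then have "v = 0 \<or> (\<forall>j<length x. x ! j \<noteq> v)" using nth_le_max_entry[of _ x] by fastforce
      then show "v \<in> {v \<in> children_C x. only_zero_repeats (x @ [v])}"
        using v True only_zero_repeats_snoc_iff unfolding children_C_def by auto
    qed
    then show ?thesis using True by simp
  qed (simp add: only_zero_repeats_snoc_iff)
  show "card {v \<in> children_C x. max_entry (x @ [v]) = 0} = (if max_entry x = 0 then 1 else 0)"
  proof (cases "max_entry x = 0")
    case True
    then have "{v \<in> children_C x. max_entry (x @ [v]) = 0} = {0}"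
      using max_entry_snoc[OF xne] unfolding children_C_def by auto
    then show ?thesis using True by simp
  qed (simp add: max_entry_snoc[OF xne])
next
  fix x n assume "max_entry x = 0"
  then show "only_zero_repeats x" by (rule only_zero_repeats_if_max_entry_0)
qed

definition gapless :: "nat list \<Rightarrow> bool" where
  "gapless x \<longleftrightarrow> (\<forall>u\<le>max_entry x. \<exists>i<length x. x ! i = u)"

lemma gapless_snoc:
  assumes "gapless x" "x \<noteq> []" "v \<le> max_entry x + 1"
  shows "gapless (x @ [v])"
  unfolding gapless_def
proof (intro allI impI)
  fix u assume u: "u \<le> max_entry (x @ [v])"
  show "\<exists>i<length (x @ [v]). (x @ [v]) ! i = u"
  proof (cases "u \<le> max_entry x")
    case True
    then obtain i where "i < length x" "x ! i = u" using assms(1) unfolding gapless_def by blast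
    then show ?thesis by (intro exI[of _ i]) (simp add: nth_append)
  next
    case False
    then have "u = v" using u assms(3) max_entry_snoc[OF assms(2)] by (simp add: max_def split: if_splits)
    then show ?thesis by (intro exI[of _ "length x"]) simp
  qed
qed

section \<open>The class \<open>{0102, 0112}\<close>\<close>

abbreviation PB :: "nat list set" where "PB \<equiv> {[0,1,0,2], [0,1,1,2]}"

text \<open>The sequences of the form \<open>0 \<dots> 0 1 2 \<dots> m\<close>.\<close>
definition staircase :: "nat list \<Rightarrow> bool" where
  "staircase x \<longleftrightarrow>
    (\<forall>i. Suc i < length x \<longrightarrow> x ! Suc i = Suc (x ! i) \<or> (x ! Suc i = 0 \<and> x ! i = 0))"

text \<open>An occurrence of \<open>010\<close> or \<open>011\<close>; appending a letter larger than its middle entry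
  creates \<open>0102\<close> or \<open>0112\<close>.\<close>
definition rise_repeat :: "nat list \<Rightarrow> nat \<Rightarrow> nat \<Rightarrow> nat \<Rightarrow> bool" where
  "rise_repeat x i j k \<longleftrightarrow>
    i < j \<and> j < k \<and> k < length x \<and> x ! i < x ! j \<and> (x ! k = x ! i \<or> x ! k = x ! j)"

lemma staircase_snoc_iff:
  assumes "x \<noteq> []"
  shows "staircase (x @ [v]) \<longleftrightarrow> staircase x \<and> (v = Suc (last x) \<or> (v = 0 \<and> last x = 0))"
proof
  assume s: "staircase (x @ [v])"
  have "staircase x" unfolding staircase_def
  proof (intro allI impI)
    fix i assume i: "Suc i < length x"
    then show "x ! Suc i = Suc (x ! i) \<or> (x ! Suc i = 0 \<and> x ! i = 0)"
      using s[unfolded staircase_def, rule_format, of i] by (simp add: nth_append)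
  qed
  moreover have "v = Suc (last x) \<or> (v = 0 \<and> last x = 0)"
    using s[unfolded staircase_def, rule_format, of "length x - 1"] assms
    by (simp add: nth_append last_conv_nth)
  ultimately show "staircase x \<and> (v = Suc (last x) \<or> (v = 0 \<and> last x = 0))" by blast
next
  assume h: "staircase x \<and> (v = Suc (last x) \<or> (v = 0 \<and> last x = 0))"
  show "staircase (x @ [v])" unfolding staircase_def
  proof (intro allI impI)
    fix i assume i: "Suc i < length (x @ [v])"
    show "(x @ [v]) ! Suc i = Suc ((x @ [v]) ! i) \<or> ((x @ [v]) ! Suc i = 0 \<and> (x @ [v]) ! i = 0)"
    proof (cases "Suc i < length x")
      case True
      then show ?thesis using h unfolding staircase_def by (simp add: nth_append)
    next
      case False
      then have "i = length x - 1" "Suc i = length x" using i by auto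
      then show ?thesis using h assms by (simp add: nth_append last_conv_nth)
    qed
  qed
qed

lemma staircase_if_max_entry_0: "max_entry x = 0 \<Longrightarrow> staircase x"
  using nth_le_max_entry[of _ x] unfolding staircase_def
  by (metis Suc_lessD le_zero_eq)

lemma rise_repeat_snoc_iff:
  "rise_repeat (x @ [v]) i j k \<longleftrightarrow> rise_repeat x i j k \<or>
    (k = length x \<and> i < j \<and> j < length x \<and> x ! i < x ! j \<and> (v = x ! i \<or> v = x ! j))"
  unfolding rise_repeat_def by (auto simp: nth_append less_Suc_eq)

lemma admissible_PB_iff:
  "admissible PB x v \<longleftrightarrow> v \<le> 1 + asc x \<and> \<not> (\<exists>i j k. rise_repeat x i j k \<and> x ! j < v)"
proof -
  have "(\<forall>p\<in>PB. \<not> has_triple x (\<lambda>a b c. red [a, b, c, v] = p)) \<longleftrightarrow>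
      \<not> has_triple x (\<lambda>a b c. a < b \<and> c = a \<and> b < v) \<and> \<not> has_triple x (\<lambda>a b c. a < b \<and> c = b \<and> b < v)"
    by (simp only: ball_simps red_eq_0102_iff red_eq_0112_iff simp_thms)
  also have "\<dots> \<longleftrightarrow> \<not> (\<exists>i j k. rise_repeat x i j k \<and> x ! j < v)"
    unfolding has_triple_def rise_repeat_def by blast
  finally show ?thesis unfolding admissible_def by blast
qed

definition inv_B :: "nat list \<Rightarrow> bool" where
  "inv_B x \<longleftrightarrow> x \<noteq> [] \<and> x ! 0 = 0 \<and> gapless x \<and>
    (\<forall>i j k. rise_repeat x i j k \<longrightarrow> last x \<le> x ! j) \<and>
    (\<not> staircase x \<longrightarrow> (\<exists>i j k. rise_repeat x i j k \<and> x ! j \<le> max 1 (last x))) \<and>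
    (staircase x \<longrightarrow> (\<forall>i j k. \<not> rise_repeat x i j k) \<and> last x = max_entry x \<and> asc x \<le> max_entry x)"

definition children_B :: "nat list \<Rightarrow> nat set" where
  "children_B x = (if staircase x then {..max_entry x + 1} else {..max 1 (last x)})"

lemma admissible_PB_iff_children_B:
  assumes x: "ascent_seq x" and I: "inv_B x"
  shows "admissible PB x v \<longleftrightarrow> v \<in> children_B x"
proof -
  let ?M = "max_entry x"
  have xne: "x \<noteq> []"
    and last_le_middle: "\<And>i j k. rise_repeat x i j k \<Longrightarrow> last x \<le> x ! j"
    and small_witness: "\<not> staircase x \<Longrightarrow> (\<exists>i j k. rise_repeat x i j k \<and> x ! j \<le> max 1 (last x))"
    and staircase_props: "staircase x \<Longrightarrow> (\<forall>i j k. \<not> rise_repeat x i j k) \<and> asc x \<le> ?M"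
    using I unfolding inv_B_def by blast+
  have Mle: "?M \<le> asc x" using max_entry_le_asc[OF x] .
  show ?thesis
  proof (cases "staircase x")
    case True
    then show ?thesis using staircase_props Mle unfolding admissible_PB_iff children_B_def by auto
  next
    case False
    have "max 1 (last x) \<le> 1 + asc x" using last_le_max_entry[OF xne] Mle by linarith
    moreover have "\<not> (\<exists>i j k. rise_repeat x i j k \<and> x ! j < v) \<longleftrightarrow> v \<le> max 1 (last x)"
    proof
      assume "\<not> (\<exists>i j k. rise_repeat x i j k \<and> x ! j < v)"
      then show "v \<le> max 1 (last x)" using small_witness[OF False] by force
    next
      assume v: "v \<le> max 1 (last x)"
      have "1 \<le> x ! j" "last x \<le> x ! j" if "rise_repeat x i j k" for i j k
        using that last_le_middle unfolding rise_repeat_def by auto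
      then show "\<not> (\<exists>i j k. rise_repeat x i j k \<and> x ! j < v)" using v by fastforce
    qed
    ultimately show ?thesis using False unfolding admissible_PB_iff children_B_def by auto
  qed
qed

lemma inv_B_snoc_rise_repeat_witness:
  assumes I: "inv_B x" and v: "v \<in> children_B x" and ns: "\<not> staircase (x @ [v])"
  shows "\<exists>i j k. rise_repeat (x @ [v]) i j k \<and> (x @ [v]) ! j \<le> max 1 v"
proof -
  let ?M = "max_entry x" and ?y = "x @ [v]"
  have xne: "x \<noteq> []" and x0: "x ! 0 = 0" and gap: "gapless x"
    and staircase_props: "staircase x \<Longrightarrow> last x = ?M"
    using I unfolding inv_B_def by blast+
  have lM: "last x \<le> ?M" using last_le_max_entry[OF xne] .
  have vb: "v \<le> ?M + 1" and vns: "\<not> staircase x \<Longrightarrow> v \<le> max 1 (last x)"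
    using v lM unfolding children_B_def by (auto split: if_splits)
  have "?M \<noteq> 0 \<and> v \<le> ?M"
  proof (cases "staircase x")
    case True
    then have "\<not> (v = Suc ?M \<or> (v = 0 \<and> ?M = 0))"
      using ns staircase_props[OF True] staircase_snoc_iff[OF xne] by simp
    then show ?thesis using vb by auto
  next
    case False
    then have "?M \<noteq> 0" "v \<le> max 1 (last x)" using vns staircase_if_max_entry_0 by blast+
    then show ?thesis using lM by (simp add: max_def split: if_splits)
  qed
  then have "max 1 v \<le> ?M" by simp
  then obtain j where j: "j < length x" "x ! j = max 1 v" using gap unfolding gapless_def by blast
  have "0 < j" using j x0 by (cases j) auto
  moreover have "v = x ! 0 \<or> v = x ! j" using j x0 by (simp add: max_def)
  ultimately have "rise_repeat ?y 0 j (length x)"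
    using j x0 by (simp add: rise_repeat_snoc_iff less_max_iff_disj)
  moreover have "?y ! j \<le> max 1 v" using j by (simp add: nth_append)
  ultimately show ?thesis by blast
qed

lemma inv_B_snoc:
  assumes I: "inv_B x" and v: "v \<in> children_B x"
  shows "inv_B (x @ [v])"
proof -
  let ?M = "max_entry x" and ?y = "x @ [v]" and ?l = "last x"
  have xne: "x \<noteq> []" and x0: "x ! 0 = 0" and gap: "gapless x"
    and last_le_middle: "\<And>i j k. rise_repeat x i j k \<Longrightarrow> last x \<le> x ! j"
    and staircase_props: "staircase x \<Longrightarrow> (\<forall>i j k. \<not> rise_repeat x i j k) \<and> last x = ?M \<and> asc x \<le> ?M"
    using I unfolding inv_B_def by blast+
  have lM: "?l \<le> ?M" using last_le_max_entry[OF xne] .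
  have vb: "v \<le> ?M + 1" and vns: "\<not> staircase x \<Longrightarrow> v \<le> max 1 ?l"
    using v lM unfolding children_B_def by (auto split: if_splits)
  have M': "max_entry ?y = max ?M v" using max_entry_snoc[OF xne] .
  have last_le: "v \<le> ?y ! j" if r: "rise_repeat ?y i j k" for i j k
  proof (cases "rise_repeat x i j k")
    case True
    then have "\<not> staircase x" using staircase_props by blast
    moreover have "1 \<le> x ! j" "?l \<le> x ! j" "j < length x"
      using True last_le_middle unfolding rise_repeat_def by auto
    ultimately show ?thesis using vns by (auto simp: nth_append)
  next
    case False
    then show ?thesis using r by (auto simp: rise_repeat_snoc_iff nth_append)
  qed
  have staircase_case: "(\<forall>i j k. \<not> rise_repeat ?y i j k) \<and> v = max_entry ?y \<and> asc ?y \<le> max_entry ?y"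
    if s: "staircase ?y"
  proof -
    have sx: "staircase x" and vv: "v = Suc ?l \<or> (v = 0 \<and> ?l = 0)"
      using s staircase_snoc_iff[OF xne] by auto
    have "\<not> rise_repeat ?y i j k" for i j k
      using staircase_props[OF sx] vv nth_le_max_entry[of j x] by (auto simp: rise_repeat_snoc_iff)
    moreover have "v = max_entry ?y" "asc ?y \<le> max_entry ?y"
      using vv staircase_props[OF sx] M' asc_snoc[OF xne, of v] by auto
    ultimately show ?thesis by blast
  qed
  have "?y \<noteq> []" "?y ! 0 = 0" using xne x0 by (simp_all add: nth_append)
  then show ?thesis
    unfolding inv_B_def last_snoc
    using last_le staircase_case inv_B_snoc_rise_repeat_witness[OF I v] gapless_snoc[OF gap xne vb]
    by blast
qed

interpretation B: generating_tree PB children_B inv_B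
proof
  show "\<forall>p\<in>PB. length p = 4" by simp
  have "\<not> rise_repeat [0] i j k" for i j k unfolding rise_repeat_def by simp
  then show "inv_B [0]" by (simp add: inv_B_def gapless_def staircase_def asc_def)
next
  fix x n v assume "1 \<le> n" "x \<in> avoiders PB n" "inv_B x"
  then show "admissible PB x v \<longleftrightarrow> v \<in> children_B x"
    using admissible_PB_iff_children_B unfolding avoiders_def by blast
next
  fix x n v assume "inv_B x" "v \<in> children_B x"
  then show "inv_B (x @ [v])" by (rule inv_B_snoc)
next
  fix x n show "finite (children_B x)" unfolding children_B_def by simp
qed

lemma card_filter_ge_split:
  assumes "finite A"
  shows "card {x \<in> A. P x \<and> j \<le> (f x :: nat)} =
    card {x \<in> A. P x \<and> f x = j} + card {x \<in> A. P x \<and> Suc j \<le> f x}"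
proof -
  have "{x \<in> A. P x \<and> j \<le> f x} = {x \<in> A. P x \<and> f x = j} \<union> {x \<in> A. P x \<and> Suc j \<le> f x}"
    by auto
  then show ?thesis using assms by (simp add: card_Un_disjoint disjoint_iff)
qed

lemma card_avoiders_PB_Suc_last:
  assumes n: "1 \<le> n"
  shows "card {y \<in> avoiders PB (Suc n). last y = j} = card {x \<in> avoiders PB n. j \<in> children_B x}"
proof (rule B.card_avoiders_Suc_filter_indicator[OF n])
  fix x
  have "{v \<in> children_B x. last (x @ [v]) = j} = (if j \<in> children_B x then {j} else {})" by auto
  then show "card {v \<in> children_B x. last (x @ [v]) = j} = (if j \<in> children_B x then 1 else 0)"
    by simp
qed

lemma in_children_B_iff:
  assumes I: "inv_B x" and j: "2 \<le> j"
  shows "j \<in> children_B x \<longleftrightarrow> j \<le> last x \<or> (staircase x \<and> j = Suc (last x))"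
proof (cases "staircase x")
  case True
  then have "last x = max_entry x" using I unfolding inv_B_def by blast
  then show ?thesis using True unfolding children_B_def by auto
qed (use j in \<open>auto simp: children_B_def\<close>)

lemma card_staircase_last:
  "1 \<le> n \<Longrightarrow> card {x \<in> avoiders PB n. staircase x \<and> last x = m} = (if m < n then 1 else 0)"
proof (induction n arbitrary: m rule: nat_induct_at_least)
  case base
  have "avoiders PB 1 = {[0]}" by (rule avoiders_1) simp
  moreover have "staircase [0]" by (simp add: staircase_def)
  ultimately show ?case by (cases "m = 0") (simp_all add: Int_def[symmetric] Collect_conj_eq)
next
  case (Suc n)
  let ?R = "\<lambda>x. staircase x \<and> (m = Suc (last x) \<or> (m = 0 \<and> last x = 0))"
  have "card {y \<in> avoiders PB (Suc n). staircase y \<and> last y = m} = card {x \<in> avoiders PB n. ?R x}"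
  proof (rule B.card_avoiders_Suc_filter_indicator[OF Suc.hyps])
    fix x assume x: "x \<in> avoiders PB n"
    have xne: "x \<noteq> []" using avoiders_nonempty[OF x Suc.hyps] .
    have "m \<in> children_B x" if "?R x"
    proof -
      have "last x = max_entry x" using that B.Inv_avoiders[OF Suc.hyps x] unfolding inv_B_def by blast
      then show ?thesis using that unfolding children_B_def by auto
    qed
    moreover have "staircase (x @ [v]) \<and> last (x @ [v]) = m \<longleftrightarrow> v = m \<and> ?R x" for v
      using staircase_snoc_iff[OF xne, of v] by auto
    ultimately have "{v \<in> children_B x. staircase (x @ [v]) \<and> last (x @ [v]) = m} = (if ?R x then {m} else {})"
      by auto
    then show "card {v \<in> children_B x. staircase (x @ [v]) \<and> last (x @ [v]) = m} = (if ?R x then 1 else 0)"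
      by simp
  qed
  also have "\<dots> = (if m < Suc n then 1 else 0)"
  proof (cases m)
    case 0
    then have "{x \<in> avoiders PB n. ?R x} = {x \<in> avoiders PB n. staircase x \<and> last x = 0}" by auto
    then show ?thesis using Suc.IH[of 0] Suc.hyps 0 by simp
  next
    case (Suc m')
    then have "{x \<in> avoiders PB n. ?R x} = {x \<in> avoiders PB n. staircase x \<and> last x = m'}" by auto
    then show ?thesis using Suc.IH[of m'] Suc by simp
  qed
  finally show ?case .
qed

lemma card_avoiders_PB_Suc_last_ge2:
  assumes n: "1 \<le> n" and j: "2 \<le> j"
  shows "card {y \<in> avoiders PB (Suc n). last y = j} =
    card {x \<in> avoiders PB n. j \<le> last x} + card {x \<in> avoiders PB n. staircase x \<and> last x = j - 1}"
proof -
  have "card {y \<in> avoiders PB (Suc n). last y = j} = card {x \<in> avoiders PB n. j \<in> children_B x}"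
    by (rule card_avoiders_PB_Suc_last[OF n])
  also have "{x \<in> avoiders PB n. j \<in> children_B x} =
      {x \<in> avoiders PB n. j \<le> last x} \<union> {x \<in> avoiders PB n. staircase x \<and> last x = j - 1}"
    using in_children_B_iff[OF B.Inv_avoiders[OF n] j] j by auto
  also have "card \<dots> =
      card {x \<in> avoiders PB n. j \<le> last x} + card {x \<in> avoiders PB n. staircase x \<and> last x = j - 1}"
    by (rule card_Un_disjoint) (use finite_avoiders j in auto)
  finally show ?thesis .
qed

lemma card_avoiders_PB_last_ge:
  "1 \<le> n \<Longrightarrow> 2 \<le> j \<Longrightarrow> card {x \<in> avoiders PB n. j \<le> last x} = 2 ^ (n - j) - 1"
proof (induction n arbitrary: j rule: nat_induct_at_least)
  case base
  then show ?case using avoiders_1[of PB] by auto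
next
  case (Suc n)
  have empty: "card {x \<in> avoiders PB (Suc n). k \<le> last x} = 0" if "Suc n \<le> k" for k
  proof -
    have e: "{x \<in> avoiders PB (Suc n). k \<le> last x} = {}"
      using avoiders_last_le[of _ PB "Suc n"] that by fastforce
    show ?thesis by (simp only: e card.empty)
  qed
  show ?case
  proof (cases "Suc n \<le> j")
    case False
    then have "j \<le> Suc n" by simp
    then show ?thesis
    proof (induction j rule: inc_induct)
      case (step k)
      have k2: "2 \<le> k" using step.hyps Suc.prems by simp
      have "k - 1 < n" using step.hyps k2 by simp
      then have "card {x \<in> avoiders PB (Suc n). last x = k} = (2 ^ (n - k) - 1) + 1"
        using card_avoiders_PB_Suc_last_ge2[OF Suc.hyps k2] Suc.IH[OF k2]
          card_staircase_last[OF Suc.hyps, of "k - 1"] by simp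
      moreover have "card {x \<in> avoiders PB (Suc n). k \<le> last x} =
          card {x \<in> avoiders PB (Suc n). last x = k} + card {x \<in> avoiders PB (Suc n). Suc k \<le> last x}"
        using card_filter_ge_split[OF finite_avoiders[of PB "Suc n"], of "\<lambda>_. True" k last] by simp
      moreover have "(2 ^ (n - k) - 1 + 1) + (2 ^ (n - k) - 1) = (2 ^ (Suc n - k) - 1 :: nat)"
        using step.hyps by (simp add: Suc_diff_le)
      ultimately show ?case using step.IH by simp
    qed (use empty in simp)
  qed (use empty in simp)
qed

lemma card_avoiders_PB_Suc:
  assumes n: "1 \<le> n"
  shows "card (avoiders PB (Suc n)) + 1 = 2 * card (avoiders PB n) + 2 ^ (n - 1)"
proof -
  let ?S = "avoiders PB (Suc n)"
  have "card ?S = card {x \<in> ?S. 0 \<le> last x}" by simp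
  also have "\<dots> = card {x \<in> ?S. last x = 0} + card {x \<in> ?S. 1 \<le> last x}"
    using card_filter_ge_split[OF finite_avoiders, of _ _ "\<lambda>_. True" 0 last] by simp
  also have "card {x \<in> ?S. 1 \<le> last x} = card {x \<in> ?S. last x = 1} + card {x \<in> ?S. 2 \<le> last x}"
    using card_filter_ge_split[OF finite_avoiders, of _ _ "\<lambda>_. True" 1 last]
    by (simp add: numeral_2_eq_2)
  finally have "card ?S = card {x \<in> ?S. last x = 0} + card {x \<in> ?S. last x = 1} + card {x \<in> ?S. 2 \<le> last x}"
    by simp
  moreover have "card {x \<in> ?S. last x = j} = card (avoiders PB n)" if "j \<le> 1" for j
  proof -
    have "{x \<in> avoiders PB n. j \<in> children_B x} = avoiders PB n"
      using that unfolding children_B_def by auto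
    then show ?thesis using card_avoiders_PB_Suc_last[OF n, of j] by simp
  qed
  moreover have "card {x \<in> ?S. 2 \<le> last x} = 2 ^ (n - 1) - 1"
    using card_avoiders_PB_last_ge[of "Suc n" 2] by simp
  moreover have "(1::nat) \<le> 2 ^ (n - 1)" by simp
  ultimately show ?thesis by simp
qed

lemma card_avoiders_PB: "1 \<le> n \<Longrightarrow> card (avoiders PB n) = closed_form n"
  using eq_closed_form_if_doubling_recurrence[of "\<lambda>n. card (avoiders PB n)"]
    card_avoiders_PB_Suc avoiders_1[of PB] by simp

section \<open>The class \<open>{0101, 0112}\<close>\<close>

abbreviation PA :: "nat list set" where "PA \<equiv> {[0,1,0,1], [0,1,1,2]}"

definition last_zero :: "nat list \<Rightarrow> nat" where
  "last_zero x = Max {i. i < length x \<and> x ! i = 0}"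

lemma
  assumes "x \<noteq> []" "x ! 0 = 0"
  shows last_zero_less_length: "last_zero x < length x"
    and nth_last_zero: "x ! last_zero x = 0"
    and nth_after_last_zero: "\<And>i. last_zero x < i \<Longrightarrow> i < length x \<Longrightarrow> x ! i \<noteq> 0"
proof -
  let ?Z = "{i. i < length x \<and> x ! i = 0}"
  have fin: "finite ?Z" by (rule finite_subset[of _ "{..<length x}"]) auto
  have "last_zero x \<in> ?Z" unfolding last_zero_def using fin assms by (intro Max_in) auto
  then show "last_zero x < length x" "x ! last_zero x = 0" by auto
  fix i assume i: "last_zero x < i" "i < length x"
  show "x ! i \<noteq> 0"
  proof
    assume "x ! i = 0"
    then have "i \<le> last_zero x" unfolding last_zero_def using Max_ge[OF fin, of i] i by simp
    then show False using i by simp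
  qed
qed

lemma last_zero_snoc_0:
  assumes "x \<noteq> []" "x ! 0 = 0"
  shows "last_zero (x @ [0]) = length x"
proof -
  have "x @ [0] \<noteq> []" "(x @ [0]) ! 0 = 0" using assms by (auto simp: nth_append)
  then show ?thesis
    using last_zero_less_length[of "x @ [0]"] nth_after_last_zero[of "x @ [0]" "length x"]
    by fastforce
qed

lemma last_zero_snoc:
  assumes "v \<noteq> 0"
  shows "last_zero (x @ [v]) = last_zero x"
proof -
  have "{i. i < length (x @ [v]) \<and> (x @ [v]) ! i = 0} = {i. i < length x \<and> x ! i = 0}"
    using assms by (auto simp: nth_append less_Suc_eq)
  then show ?thesis unfolding last_zero_def by simp
qed

text \<open>The nonzero letters that may be appended to an avoider \<open>x\<close> form the interval from
  \<open>low_A x\<close>, the letter following the last zero (or \<open>max_entry x + 1\<close> if \<open>x\<close> ends with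
  \<open>0\<close>), to \<open>high_A x\<close>; \<open>label_A x\<close> is the number of these letters.\<close>
definition low_A :: "nat list \<Rightarrow> nat" where
  "low_A x = (if last_zero x = length x - 1 then max_entry x + 1 else x ! (last_zero x + 1))"

definition high_A :: "nat list \<Rightarrow> nat" where
  "high_A x = (if only_zero_repeats x then max_entry x + 1 else last x)"

definition children_A :: "nat list \<Rightarrow> nat set" where
  "children_A x = {0} \<union> {low_A x..high_A x}"

definition label_A :: "nat list \<Rightarrow> nat" where
  "label_A x = high_A x + 1 - low_A x"

definition inv_A :: "nat list \<Rightarrow> bool" where
  "inv_A x \<longleftrightarrow> x \<noteq> [] \<and> x ! 0 = 0 \<and> gapless x \<and>
    (\<forall>u. 1 \<le> u \<and> u < low_A x \<longrightarrow> (\<exists>j<last_zero x. x ! j = u)) \<and>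
    (\<not> only_zero_repeats x \<and> last x \<noteq> 0 \<longrightarrow> (\<exists>j<length x - 1. x ! j = last x)) \<and>
    (\<forall>i\<le>last_zero x. x ! i < low_A x) \<and>
    (\<forall>i. last_zero x < i \<and> i < length x \<longrightarrow> low_A x \<le> x ! i) \<and>
    (\<forall>j k. j < k \<and> k < length x \<and> x ! j = x ! k \<and> 0 < x ! j \<longrightarrow> last x \<le> x ! j) \<and>
    (\<forall>j k. last_zero x < j \<and> j < k \<and> k < length x \<and> x ! k < x ! j \<longrightarrow> last x \<le> x ! k) \<and>
    (only_zero_repeats x \<longrightarrow> asc x \<le> max_entry x) \<and>
    (only_zero_repeats x \<longrightarrow> (\<forall>j k. last_zero x < j \<and> j < k \<and> k < length x \<longrightarrow> x ! j < x ! k))"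

lemma low_A_pos:
  assumes "x \<noteq> []" "x ! 0 = 0"
  shows "1 \<le> low_A x"
proof (cases "last_zero x = length x - 1")
  case False
  then have "last_zero x + 1 < length x" using last_zero_less_length[OF assms] by linarith
  then have "x ! (last_zero x + 1) \<noteq> 0" using nth_after_last_zero[OF assms] by simp
  then show ?thesis using False unfolding low_A_def by simp
qed (simp add: low_A_def)

lemma low_A_le:
  assumes "x \<noteq> []" "x ! 0 = 0"
  shows "low_A x \<le> max_entry x + 1"
proof (cases "last_zero x = length x - 1")
  case False
  then have "last_zero x + 1 < length x" using last_zero_less_length[OF assms] by linarith
  then show ?thesis using False nth_le_max_entry unfolding low_A_def by fastforce
qed (simp add: low_A_def)

lemma high_A_le: "x \<noteq> [] \<Longrightarrow> high_A x \<le> max_entry x + 1"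
  unfolding high_A_def using last_le_max_entry[of x] by auto

lemma admissible_PA_iff:
  "admissible PA x v \<longleftrightarrow> v \<le> 1 + asc x \<and>
     \<not> has_triple x (\<lambda>a b c. a < b \<and> c = a \<and> v = b) \<and> \<not> has_triple x (\<lambda>a b c. a < b \<and> c = b \<and> b < v)"
  unfolding admissible_def by (simp only: ball_simps red_eq_0101_iff red_eq_0112_iff simp_thms)

lemma admissible_PA_low_A_le:
  assumes I: "inv_A x" and h: "admissible PA x v" and v0: "v \<noteq> 0"
  shows "low_A x \<le> v"
proof (rule ccontr)
  have x0: "x ! 0 = 0" and xne: "x \<noteq> []"
    and low_before_zero: "\<And>u. 1 \<le> u \<Longrightarrow> u < low_A x \<Longrightarrow> \<exists>j<last_zero x. x ! j = u"
    using I unfolding inv_A_def by blast+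
  assume "\<not> low_A x \<le> v"
  then obtain j where j: "j < last_zero x" "x ! j = v" using low_before_zero[of v] v0 by auto
  have "0 < j" using j x0 v0 by (cases j) auto
  have "has_triple x (\<lambda>a b c. a < b \<and> c = a \<and> v = b)"
    by (rule has_tripleI[of 0 j "last_zero x"])
      (use j x0 v0 \<open>0 < j\<close> last_zero_less_length[OF xne x0] nth_last_zero[OF xne x0] in auto)
  then show False using h unfolding admissible_PA_iff by blast
qed

lemma admissible_PA_le_high_A:
  assumes I: "inv_A x" and h: "admissible PA x v" and sv: "low_A x \<le> v"
  shows "v \<le> high_A x"
proof (rule ccontr)
  let ?M = "max_entry x" and ?n = "length x"
  assume nvt: "\<not> v \<le> high_A x"
  have xne: "x \<noteq> []" and x0: "x ! 0 = 0"
    and last_repeats: "\<not> only_zero_repeats x \<Longrightarrow> last x \<noteq> 0 \<Longrightarrow> (\<exists>j<?n - 1. x ! j = last x)"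
    and asc_le_max: "only_zero_repeats x \<Longrightarrow> asc x \<le> ?M"
    using I unfolding inv_A_def by blast+
  have lastn: "x ! (?n - 1) = last x" using xne by (simp add: last_conv_nth)
  have "has_triple x (\<lambda>a b c. a < b \<and> c = b \<and> b < v)"
  proof (cases "only_zero_repeats x")
    case True
    then show ?thesis using nvt h asc_le_max unfolding high_A_def admissible_PA_iff by simp
  next
    case nrf: False
    show ?thesis
    proof (cases "last x = 0")
      case False
      obtain j where j: "j < ?n - 1" "x ! j = last x" using last_repeats[OF nrf False] by blast
      have "0 < j" using j x0 False by (cases j) auto
      show ?thesis
        by (rule has_tripleI[of 0 j "?n - 1"])
          (use j x0 False \<open>0 < j\<close> lastn nvt nrf xne in \<open>auto simp: high_A_def\<close>)
    next
      case True
      then have "last_zero x = ?n - 1"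
        using nth_after_last_zero[OF xne x0, of "?n - 1"] lastn last_zero_less_length[OF xne x0]
        by fastforce
      then have sM: "low_A x = ?M + 1" unfolding low_A_def by simp
      obtain j k where jk: "j < k" "k < ?n" "x ! j = x ! k" "x ! j \<noteq> 0"
        using nrf unfolding only_zero_repeats_def by blast
      have "0 < j" using jk x0 by (cases j) auto
      have "x ! j \<le> ?M" using nth_le_max_entry jk by (meson less_trans)
      show ?thesis
        by (rule has_tripleI[of 0 j k]) (use jk x0 \<open>0 < j\<close> \<open>x ! j \<le> ?M\<close> sM sv in auto)
    qed
  qed
  then show False using h unfolding admissible_PA_iff by blast
qed

lemma admissible_PA_imp_children_A:
  assumes "inv_A x" "admissible PA x v"
  shows "v \<in> children_A x"
  using admissible_PA_low_A_le[OF assms] admissible_PA_le_high_A[OF assms]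
  unfolding children_A_def by (cases "v = 0") auto

lemma children_A_admissible:
  assumes x: "ascent_seq x" and I: "inv_A x" and v: "v \<in> children_A x"
  shows "admissible PA x v"
proof -
  let ?M = "max_entry x" and ?z = "last_zero x" and ?s = "low_A x" and ?t = "high_A x"
    and ?l = "last x" and ?n = "length x"
  have xne: "x \<noteq> []"
    and prefix_below_low: "\<And>i. i \<le> ?z \<Longrightarrow> x ! i < ?s"
    and repeat_ge_last: "\<And>j k. j < k \<Longrightarrow> k < ?n \<Longrightarrow> x ! j = x ! k \<Longrightarrow> 0 < x ! j \<Longrightarrow> ?l \<le> x ! j"
    and descent_ge_last: "\<And>j k. ?z < j \<Longrightarrow> j < k \<Longrightarrow> k < ?n \<Longrightarrow> x ! k < x ! j \<Longrightarrow> ?l \<le> x ! k"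
    and increasing_after_zero: "\<And>j k. only_zero_repeats x \<Longrightarrow> ?z < j \<Longrightarrow> j < k \<Longrightarrow> k < ?n \<Longrightarrow> x ! j < x ! k"
    using I unfolding inv_A_def by blast+
  have vcase: "v = 0 \<or> (?s \<le> v \<and> v \<le> ?t)" using v unfolding children_A_def by auto
  have "v \<le> 1 + asc x" using vcase high_A_le[OF xne] max_entry_le_asc[OF x] by auto
  moreover have "\<not> has_triple x (\<lambda>a b c. a < b \<and> c = a \<and> v = b)"
  proof
    assume "has_triple x (\<lambda>a b c. a < b \<and> c = a \<and> v = b)"
    then obtain i j k where ijk: "i < j" "j < k" "k < ?n" "x ! i < x ! j" "x ! k = x ! i" "v = x ! j"
      unfolding has_triple_def by blast
    then have vst: "?s \<le> v" "v \<le> ?t" using vcase by auto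
    have jz: "?z < j" using prefix_below_low[of j] vst ijk by (meson leD not_le_imp_less)
    show False
    proof (cases "only_zero_repeats x")
      case True
      then show False using increasing_after_zero[OF True jz ijk(2,3)] ijk by simp
    next
      case False
      then show False using descent_ge_last[OF jz ijk(2,3)] ijk vst unfolding high_A_def by simp
    qed
  qed
  moreover have "\<not> has_triple x (\<lambda>a b c. a < b \<and> c = b \<and> b < v)"
  proof
    assume "has_triple x (\<lambda>a b c. a < b \<and> c = b \<and> b < v)"
    then obtain i j k where ijk: "i < j" "j < k" "k < ?n" "x ! i < x ! j" "x ! k = x ! j" "x ! j < v"
      unfolding has_triple_def by blast
    have vst: "v \<le> ?t" using vcase ijk by auto
    show False
    proof (cases "only_zero_repeats x")
      case True
      then have "x ! j = 0" using ijk unfolding only_zero_repeats_def by (metis less_trans)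
      then show False using ijk by simp
    next
      case False
      then show False using repeat_ge_last[of j k] ijk vst unfolding high_A_def by simp
    qed
  qed
  ultimately show ?thesis unfolding admissible_PA_iff by blast
qed

lemma low_A_snoc_0:
  assumes "x \<noteq> []" "x ! 0 = 0"
  shows "low_A (x @ [0]) = max_entry x + 1"
  using last_zero_snoc_0[OF assms] max_entry_snoc[OF assms(1), of 0] unfolding low_A_def by simp

lemma low_A_snoc:
  assumes xne: "x \<noteq> []" and x0: "x ! 0 = 0" and v0: "v \<noteq> 0" and v: "v \<in> children_A x"
  shows "low_A (x @ [v]) = low_A x"
proof -
  have z': "last_zero (x @ [v]) = last_zero x" using last_zero_snoc[OF v0] .
  have zp: "last_zero x < length x" using last_zero_less_length[OF xne x0] .
  have vst: "low_A x \<le> v" "v \<le> high_A x" using v v0 unfolding children_A_def by auto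
  show ?thesis
  proof (cases "last_zero x = length x - 1")
    case True
    then have sM: "low_A x = max_entry x + 1" unfolding low_A_def by simp
    then have "v = max_entry x + 1" using vst high_A_le[OF xne] by simp
    moreover have "last_zero (x @ [v]) \<noteq> length (x @ [v]) - 1" using z' zp by simp
    ultimately show ?thesis using z' True sM xne unfolding low_A_def[of "x @ [v]"]
      by (simp add: nth_append)
  next
    case False
    then have "last_zero x + 1 < length x" using zp by linarith
    then show ?thesis using z' False unfolding low_A_def by (simp add: nth_append)
  qed
qed

lemma fresh_child_A:
  assumes I: "inv_A x" and v: "v \<in> children_A x" "v \<noteq> 0" and fresh: "\<forall>j<length x. x ! j \<noteq> v"
  shows "v = max_entry x + 1" "only_zero_repeats x"
proof -
  have xne: "x \<noteq> []" and "gapless x" using I unfolding inv_A_def by blast+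
  then have "\<not> v \<le> max_entry x" using fresh unfolding gapless_def by blast
  moreover have "v \<le> high_A x" using v unfolding children_A_def by auto
  ultimately show "v = max_entry x + 1" "only_zero_repeats x"
    using high_A_le[OF xne] last_le_max_entry[OF xne] unfolding high_A_def
    by (auto split: if_splits)
qed

lemma inv_A_snoc_0:
  assumes I: "inv_A x"
  shows "inv_A (x @ [0])"
proof -
  let ?M = "max_entry x" and ?n = "length x" and ?y = "x @ [0]"
  have xne: "x \<noteq> []" and x0: "x ! 0 = 0" and gap: "gapless x"
    and asc_le_max: "only_zero_repeats x \<Longrightarrow> asc x \<le> ?M"
    using I unfolding inv_A_def by blast+
  have z': "last_zero ?y = ?n" using last_zero_snoc_0[OF xne x0] .
  have s': "low_A ?y = ?M + 1" using low_A_snoc_0[OF xne x0] .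
  have M': "max_entry ?y = ?M" using max_entry_snoc[OF xne, of 0] by simp
  have "\<exists>j<last_zero ?y. ?y ! j = u" if "u < low_A ?y" for u
  proof -
    have "u \<le> ?M" using that s' by simp
    then obtain i where "i < ?n" "x ! i = u" using gap unfolding gapless_def by blast
    then show ?thesis using z' by (intro exI[of _ i]) (simp add: nth_append)
  qed
  moreover have "?y ! i < low_A ?y" if "i \<le> last_zero ?y" for i
    using that z' s' nth_le_max_entry[of i x] by (auto simp: nth_append le_less)
  moreover have "gapless ?y" using gapless_snoc[OF gap xne] by simp
  moreover have "only_zero_repeats ?y \<longrightarrow> asc ?y \<le> max_entry ?y"
    using only_zero_repeats_snoc_iff[of x 0] asc_le_max M' asc_snoc[OF xne, of 0] by simp
  moreover have "?y ! 0 = 0" using xne x0 by (simp add: nth_append)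
  ultimately show ?thesis unfolding inv_A_def using z' by auto
qed

lemma inv_A_snoc_nonzero_last_le:
  assumes I: "inv_A x" and v: "v \<in> children_A x" "v \<noteq> 0"
  shows "\<forall>j k. j < k \<and> k < length (x @ [v]) \<and> (x @ [v]) ! j = (x @ [v]) ! k \<and> 0 < (x @ [v]) ! j
      \<longrightarrow> v \<le> (x @ [v]) ! j"
    and "\<forall>j k. last_zero x < j \<and> j < k \<and> k < length (x @ [v]) \<and> (x @ [v]) ! k < (x @ [v]) ! j
      \<longrightarrow> v \<le> (x @ [v]) ! k"
proof -
  let ?n = "length x" and ?y = "x @ [v]"
  have repeat_ge_last: "\<And>j k. j < k \<Longrightarrow> k < ?n \<Longrightarrow> x ! j = x ! k \<Longrightarrow> 0 < x ! j \<Longrightarrow> last x \<le> x ! j"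
    and descent_ge_last: "\<And>j k. last_zero x < j \<Longrightarrow> j < k \<Longrightarrow> k < ?n \<Longrightarrow> x ! k < x ! j \<Longrightarrow> last x \<le> x ! k"
    and increasing_after_zero: "\<And>j k. only_zero_repeats x \<Longrightarrow> last_zero x < j \<Longrightarrow> j < k \<Longrightarrow> k < ?n \<Longrightarrow> x ! j < x ! k"
    using I unfolding inv_A_def by blast+
  have vl: "v \<le> last x" if "\<not> only_zero_repeats x"
    using v that unfolding children_A_def high_A_def by auto
  show "\<forall>j k. j < k \<and> k < length ?y \<and> ?y ! j = ?y ! k \<and> 0 < ?y ! j \<longrightarrow> v \<le> ?y ! j"
  proof (intro allI impI)
    fix j k assume jk: "j < k \<and> k < length ?y \<and> ?y ! j = ?y ! k \<and> 0 < ?y ! j"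
    show "v \<le> ?y ! j"
    proof (cases "k < ?n")
      case True
      then have e: "x ! j = x ! k" "0 < x ! j" "?y ! j = x ! j" using jk by (auto simp: nth_append)
      have "\<not> only_zero_repeats x"
      proof
        assume "only_zero_repeats x"
        then have "x ! j = 0" using e jk True unfolding only_zero_repeats_def by blast
        then show False using e by simp
      qed
      then show ?thesis using vl repeat_ge_last[of j k] jk True e by fastforce
    next
      case False
      then have "k = ?n" "j < ?n" using jk by auto
      then have "?y ! j = x ! j" "?y ! k = v" by (simp_all add: nth_append)
      then show ?thesis using jk by simp
    qed
  qed
  show "\<forall>j k. last_zero x < j \<and> j < k \<and> k < length ?y \<and> ?y ! k < ?y ! j \<longrightarrow> v \<le> ?y ! k"
  proof (intro allI impI)
    fix j k assume jk: "last_zero x < j \<and> j < k \<and> k < length ?y \<and> ?y ! k < ?y ! j"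
    show "v \<le> ?y ! k"
    proof (cases "k < ?n")
      case True
      then have e: "x ! k < x ! j" "?y ! k = x ! k" using jk by (auto simp: nth_append)
      then have "\<not> only_zero_repeats x" using increasing_after_zero[of j k] jk True by fastforce
      then show ?thesis using vl descent_ge_last[of j k] jk True e by fastforce
    next
      case False
      then have "k = ?n" using jk by simp
      then show ?thesis by simp
    qed
  qed
qed

lemma inv_A_snoc_nonzero:
  assumes I: "inv_A x" and v: "v \<in> children_A x" and v0: "v \<noteq> 0"
  shows "inv_A (x @ [v])"
proof -
  let ?M = "max_entry x" and ?z = "last_zero x" and ?s = "low_A x" and ?n = "length x"
    and ?y = "x @ [v]"
  have xne: "x \<noteq> []" and x0: "x ! 0 = 0" and gap: "gapless x"
    and low_before_zero: "\<And>u. 1 \<le> u \<Longrightarrow> u < ?s \<Longrightarrow> (\<exists>j<?z. x ! j = u)"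
    and prefix_below_low: "\<And>i. i \<le> ?z \<Longrightarrow> x ! i < ?s"
    and asc_le_max: "only_zero_repeats x \<Longrightarrow> asc x \<le> ?M"
    and increasing_after_zero: "\<And>j k. only_zero_repeats x \<Longrightarrow> ?z < j \<Longrightarrow> j < k \<Longrightarrow> k < ?n \<Longrightarrow> x ! j < x ! k"
    and suffix_ge_low: "\<And>i. ?z < i \<Longrightarrow> i < ?n \<Longrightarrow> ?s \<le> x ! i"
    using I unfolding inv_A_def by blast+
  have z': "last_zero ?y = ?z" using last_zero_snoc[OF v0] .
  have s': "low_A ?y = ?s" using low_A_snoc[OF xne x0 v0 v] .
  have zp: "?z < ?n" using last_zero_less_length[OF xne x0] .
  have vst: "?s \<le> v" "v \<le> high_A x" using v v0 unfolding children_A_def by auto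
  have vM: "v \<le> ?M + 1" using vst high_A_le[OF xne] by simp
  have ozr: "only_zero_repeats ?y \<longleftrightarrow> only_zero_repeats x \<and> (\<forall>j<?n. x ! j \<noteq> v)"
    using only_zero_repeats_snoc_iff[of x v] v0 by simp
  note fresh = fresh_child_A[OF I v v0]
  have "\<exists>j<last_zero ?y. ?y ! j = u" if u: "1 \<le> u" "u < low_A ?y" for u
  proof -
    have "u < ?s" using u(2) s' by simp
    then obtain j where "j < ?z" "x ! j = u" using low_before_zero u(1) by blast
    then show ?thesis using z' zp by (intro exI[of _ j]) (simp add: nth_append)
  qed
  moreover have "\<exists>j<length ?y - 1. ?y ! j = last ?y" if "\<not> only_zero_repeats ?y"
    using that ozr fresh by (auto simp: nth_append)
  moreover have "?y ! i < low_A ?y" if "i \<le> last_zero ?y" for i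
    using that prefix_below_low z' s' zp by (simp add: nth_append)
  moreover have "low_A ?y \<le> ?y ! i" if "last_zero ?y < i" "i < length ?y" for i
    using that suffix_ge_low z' s' vst by (auto simp: nth_append less_Suc_eq)
  moreover have "asc ?y \<le> max_entry ?y" if "only_zero_repeats ?y"
    using that ozr fresh asc_le_max max_entry_snoc[OF xne, of v] asc_snoc[OF xne, of v] by simp
  moreover have "?y ! j < ?y ! k"
    if "only_zero_repeats ?y" "last_zero ?y < j" "j < k" "k < length ?y" for j k
  proof (cases "k < ?n")
    case True
    then show ?thesis using that ozr increasing_after_zero z' by (simp add: nth_append)
  next
    case False
    then have "k = ?n" "j < ?n" using that by auto
    moreover have "v = ?M + 1" using that(1) ozr fresh by blast
    ultimately show ?thesis using nth_le_max_entry[of j x] by (simp add: nth_append)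
  qed
  moreover have "?y ! 0 = 0" using xne x0 by (simp add: nth_append)
  ultimately show ?thesis
    unfolding inv_A_def using gapless_snoc[OF gap xne vM] inv_A_snoc_nonzero_last_le[OF I v v0] z'
    by simp
qed

lemma inv_A_snoc: "inv_A x \<Longrightarrow> v \<in> children_A x \<Longrightarrow> inv_A (x @ [v])"
  using inv_A_snoc_0 inv_A_snoc_nonzero by (cases "v = 0") auto

lemma last_zero_singleton: "last_zero [0] = 0"
  using last_zero_less_length[of "[0]"] by simp

lemma low_A_singleton: "low_A [0] = 1"
  unfolding low_A_def using last_zero_singleton by simp

lemma label_A_singleton: "label_A [0] = 1"
  unfolding label_A_def high_A_def using low_A_singleton only_zero_repeats_singleton by simp

interpretation A: generating_tree PA children_A inv_A
proof
  show "\<forall>p\<in>PA. length p = 4" by simp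
  have "asc [0] = 0" by (simp add: asc_def)
  then show "inv_A [0]"
    unfolding inv_A_def gapless_def using last_zero_singleton low_A_singleton only_zero_repeats_singleton
    by auto
next
  fix x n v assume "1 \<le> n" "x \<in> avoiders PA n" "inv_A x"
  then show "admissible PA x v \<longleftrightarrow> v \<in> children_A x"
    using admissible_PA_imp_children_A children_A_admissible unfolding avoiders_def by blast
next
  fix x n v assume "inv_A x" "v \<in> children_A x"
  then show "inv_A (x @ [v])" by (rule inv_A_snoc)
next
  fix x n show "finite (children_A x)" unfolding children_A_def by simp
qed

lemma label_A_only_zero_repeats:
  assumes I: "inv_A x" and r: "only_zero_repeats x"
  shows "high_A x = max_entry x + 1" "label_A x = max_entry x + 2 - low_A x" "1 \<le> label_A x"
proof -
  have xne: "x \<noteq> []" "x ! 0 = 0" using I unfolding inv_A_def by auto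
  show t: "high_A x = max_entry x + 1" using r unfolding high_A_def by simp
  show "label_A x = max_entry x + 2 - low_A x" using t unfolding label_A_def by simp
  then show "1 \<le> label_A x" using low_A_le[OF xne] by simp
qed

lemma label_A_repeat:
  assumes I: "inv_A x" and r: "\<not> only_zero_repeats x" and l: "last x \<noteq> 0"
  shows "low_A x \<le> last x" "label_A x = last x + 1 - low_A x" "1 \<le> label_A x" "label_A x \<le> last x"
proof -
  have xne: "x \<noteq> []" "x ! 0 = 0"
    and suffix_ge_low: "\<And>i. last_zero x < i \<Longrightarrow> i < length x \<Longrightarrow> low_A x \<le> x ! i"
    using I unfolding inv_A_def by blast+
  have zp: "last_zero x < length x" "x ! last_zero x = 0"
    using last_zero_less_length[OF xne] nth_last_zero[OF xne] by auto
  have ln: "x ! (length x - 1) = last x" using xne by (simp add: last_conv_nth)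
  have "last_zero x \<noteq> length x - 1" using zp ln l by auto
  then have "last_zero x < length x - 1" using zp by simp
  then show sl: "low_A x \<le> last x" using suffix_ge_low[of "length x - 1"] ln xne by simp
  show lab: "label_A x = last x + 1 - low_A x" using r unfolding label_A_def high_A_def by simp
  show "1 \<le> label_A x" using lab sl by simp
  show "label_A x \<le> last x" using lab low_A_pos[OF xne] by simp
qed

lemma only_zero_repeats_snoc_0 [simp]: "only_zero_repeats (x @ [0]) = only_zero_repeats x"
  using only_zero_repeats_snoc_iff[of x 0] by simp

lemma label_A_snoc_0:
  assumes "inv_A x" "only_zero_repeats x"
  shows "label_A (x @ [0]) = 1"
proof -
  have xne: "x \<noteq> []" "x ! 0 = 0" using assms(1) unfolding inv_A_def by auto
  then show ?thesis using assms(2) low_A_snoc_0[OF xne] max_entry_snoc[OF xne(1), of 0]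
    unfolding label_A_def high_A_def by simp
qed

lemma
  assumes I: "inv_A x" and v: "v \<in> children_A x" and v0: "v \<noteq> 0"
  shows only_zero_repeats_snoc_child_A:
      "only_zero_repeats (x @ [v]) \<longleftrightarrow> only_zero_repeats x \<and> v = max_entry x + 1"
    and label_A_snoc_child_A: "label_A (x @ [v]) =
      (if only_zero_repeats x \<and> v = max_entry x + 1 then label_A x + 1 else v + 1 - low_A x)"
proof -
  have xne: "x \<noteq> []" "x ! 0 = 0" and gap: "gapless x"
    using I unfolding inv_A_def by blast+
  have vst: "low_A x \<le> v" "v \<le> high_A x" using v v0 unfolding children_A_def by auto
  have vM: "v \<le> max_entry x + 1" using vst high_A_le[OF xne(1)] by simp
  have "(\<forall>j<length x. x ! j \<noteq> v) \<longleftrightarrow> v = max_entry x + 1"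
  proof
    assume "\<forall>j<length x. x ! j \<noteq> v"
    then have "\<not> v \<le> max_entry x" using gap unfolding gapless_def by blast
    then show "v = max_entry x + 1" using vM by simp
  next
    assume "v = max_entry x + 1"
    then show "\<forall>j<length x. x ! j \<noteq> v" using nth_le_max_entry[of _ x] by fastforce
  qed
  then show only_zero_repeats': "only_zero_repeats (x @ [v]) \<longleftrightarrow> only_zero_repeats x \<and> v = max_entry x + 1"
    using only_zero_repeats_snoc_iff[of x v] v0 by simp
  have s': "low_A (x @ [v]) = low_A x" using low_A_snoc[OF xne v0 v] .
  have M': "max_entry (x @ [v]) = max (max_entry x) v" using max_entry_snoc[OF xne(1)] .
  show "label_A (x @ [v]) = (if only_zero_repeats x \<and> v = max_entry x + 1 then label_A x + 1 else v + 1 - low_A x)"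
  proof (cases "only_zero_repeats x \<and> v = max_entry x + 1")
    case True
    have l1: "label_A x = max_entry x + 2 - low_A x" using label_A_only_zero_repeats[OF I] True by simp
    have sle: "low_A x \<le> max_entry x + 1" using low_A_le[OF xne] .
    have ry: "only_zero_repeats (x @ [v])" using only_zero_repeats' True by simp
    have "max_entry (x @ [v]) = max_entry x + 1" using M' True by simp
    then have "high_A (x @ [v]) = max_entry x + 2" using ry unfolding high_A_def by simp
    then have "label_A (x @ [v]) = max_entry x + 3 - low_A x" using s' unfolding label_A_def by simp
    also have "\<dots> = label_A x + 1" using l1 sle by simp
    finally show ?thesis using True by simp
  next
    case False
    have ry: "\<not> only_zero_repeats (x @ [v])" using only_zero_repeats' False by simp
    then have "high_A (x @ [v]) = v" unfolding high_A_def by simp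
    then have "label_A (x @ [v]) = v + 1 - low_A x" using s' unfolding label_A_def by simp
    then show ?thesis by (simp only: if_not_P[OF False])
  qed
qed

lemma card_filter_split: "finite A \<Longrightarrow> card A = card {x \<in> A. P x} + card {x \<in> A. \<not> P x}"
  using card_Int_Diff[of A "Collect P"] by (simp add: Int_def set_diff_eq conj_commute)

lemma max_entry_Suc_in_children_A:
  assumes I: "inv_A x" and r: "only_zero_repeats x"
  shows "max_entry x + 1 \<in> children_A x"
proof -
  have xne: "x \<noteq> []" "x ! 0 = 0" using I unfolding inv_A_def by auto
  then show ?thesis
    using low_A_le[OF xne] label_A_only_zero_repeats(1)[OF I r] unfolding children_A_def by simp
qed

lemma card_children_A_zero_repeats:
  assumes I: "inv_A x"
  shows "card {v \<in> children_A x. only_zero_repeats (x @ [v]) \<and> L \<le> label_A (x @ [v])} =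
    (if only_zero_repeats x \<and> L \<le> 1 then 1 else 0) + (if only_zero_repeats x \<and> L \<le> label_A x + 1 then 1 else 0)"
proof (cases "only_zero_repeats x")
  case True
  have eq: "{v \<in> children_A x. only_zero_repeats (x @ [v]) \<and> L \<le> label_A (x @ [v])} =
     (if L \<le> 1 then {0} else {}) \<union> (if L \<le> label_A x + 1 then {max_entry x + 1} else {})"
  proof (intro set_eqI iffI)
    fix v assume "v \<in> {v \<in> children_A x. only_zero_repeats (x @ [v]) \<and> L \<le> label_A (x @ [v])}"
    then have v: "v \<in> children_A x" "only_zero_repeats (x @ [v])" "L \<le> label_A (x @ [v])" by auto
    show "v \<in> (if L \<le> 1 then {0} else {}) \<union> (if L \<le> label_A x + 1 then {max_entry x + 1} else {})"
    proof (cases "v = 0")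
      case True
      then show ?thesis using v label_A_snoc_0[OF I \<open>only_zero_repeats x\<close>] by simp
    next
      case False
      have "v = max_entry x + 1" using only_zero_repeats_snoc_child_A[OF I v(1) False] v(2) by simp
      then show ?thesis
        using label_A_snoc_child_A[OF I v(1) False] v(3) \<open>only_zero_repeats x\<close> by simp
    qed
  next
    fix v assume v: "v \<in> (if L \<le> 1 then {0} else {}) \<union> (if L \<le> label_A x + 1 then {max_entry x + 1} else {})"
    show "v \<in> {v \<in> children_A x. only_zero_repeats (x @ [v]) \<and> L \<le> label_A (x @ [v])}"
    proof (cases "v = 0")
      case True
      then have "L \<le> 1" using v by (auto split: if_splits)
      then show ?thesis
        using True label_A_snoc_0[OF I \<open>only_zero_repeats x\<close>] \<open>only_zero_repeats x\<close>
        unfolding children_A_def by simp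
    next
      case False
      then have vv: "v = max_entry x + 1" "L \<le> label_A x + 1" using v by (auto split: if_splits)
      have vin: "v \<in> children_A x" using max_entry_Suc_in_children_A[OF I \<open>only_zero_repeats x\<close>] vv by simp
      show ?thesis
        using vin only_zero_repeats_snoc_child_A[OF I vin False] label_A_snoc_child_A[OF I vin False]
          vv \<open>only_zero_repeats x\<close>
        by simp
    qed
  qed
  show ?thesis unfolding eq using True by (auto simp: card_insert_if)
next
  case False
  have e: "{v \<in> children_A x. only_zero_repeats (x @ [v]) \<and> L \<le> label_A (x @ [v])} = {}"
  proof (intro set_eqI iffI)
    fix v assume "v \<in> {v \<in> children_A x. only_zero_repeats (x @ [v]) \<and> L \<le> label_A (x @ [v])}"
    then have v: "v \<in> children_A x" "only_zero_repeats (x @ [v])" by auto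
    show "v \<in> {}"
    proof (cases "v = 0")
      case True then show ?thesis using v False by simp
    next
      case f2: False then show ?thesis using v only_zero_repeats_snoc_child_A[OF I v(1) f2] False by simp
    qed
  qed simp
  show ?thesis using False by (simp only: e card.empty) simp
qed

text \<open>By \<open>label_A_snoc_child_A\<close>, a child of \<open>x\<close> with a repeated nonzero letter and label \<open>L\<close>
  can only be \<open>x @ [L + low_A x - 1]\<close>; this says when it is one.\<close>
lemma label_A_interval_iff:
  assumes I: "inv_A x" and L: "1 \<le> L"
  shows "L + low_A x - 1 \<le> high_A x \<and> \<not> (only_zero_repeats x \<and> L + low_A x - 1 = max_entry x + 1) \<longleftrightarrow>
    (only_zero_repeats x \<and> L + 1 \<le> label_A x) \<or> (\<not> only_zero_repeats x \<and> last x \<noteq> 0 \<and> L \<le> label_A x)"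
proof -
  have xne: "x \<noteq> []" "x ! 0 = 0" using I unfolding inv_A_def by auto
  have s1: "1 \<le> low_A x" using low_A_pos[OF xne] .
  show ?thesis
  proof (cases "only_zero_repeats x")
    case True
    have "label_A x = max_entry x + 2 - low_A x" "high_A x = max_entry x + 1" using label_A_only_zero_repeats[OF I True] by auto
    moreover have "low_A x \<le> max_entry x + 1" using low_A_le[OF xne] .
    ultimately show ?thesis using True L s1 by auto
  next
    case nr: False
    show ?thesis
    proof (cases "last x = 0")
      case True
      then have "high_A x = 0" using nr unfolding high_A_def by simp
      then show ?thesis using nr True L s1 by simp
    next
      case False
      have "low_A x \<le> last x" "label_A x = last x + 1 - low_A x" using label_A_repeat[OF I nr False] by auto
      moreover have "high_A x = last x" using nr unfolding high_A_def by simp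
      ultimately show ?thesis using nr False L s1 by auto
    qed
  qed
qed

lemma card_children_A_repeat:
  assumes I: "inv_A x" and L: "1 \<le> L"
  shows "card {v \<in> children_A x. \<not> only_zero_repeats (x @ [v]) \<and> last (x @ [v]) \<noteq> 0 \<and> label_A (x @ [v]) = L} =
    (if only_zero_repeats x \<and> L + 1 \<le> label_A x then 1 else 0) + (if \<not> only_zero_repeats x \<and> last x \<noteq> 0 \<and> L \<le> label_A x then 1 else 0)"
proof -
  have xne: "x \<noteq> []" "x ! 0 = 0" using I unfolding inv_A_def by auto
  let ?w = "L + low_A x - 1"
  let ?c = "?w \<le> high_A x \<and> \<not> (only_zero_repeats x \<and> ?w = max_entry x + 1)"
  have s1: "1 \<le> low_A x" using low_A_pos[OF xne] .
  have eq: "{v \<in> children_A x. \<not> only_zero_repeats (x @ [v]) \<and> last (x @ [v]) \<noteq> 0 \<and> label_A (x @ [v]) = L} =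
     (if ?c then {?w} else {})"
  proof (intro set_eqI iffI)
    fix v assume "v \<in> {v \<in> children_A x. \<not> only_zero_repeats (x @ [v]) \<and> last (x @ [v]) \<noteq> 0 \<and> label_A (x @ [v]) = L}"
    then have v: "v \<in> children_A x" "\<not> only_zero_repeats (x @ [v])" "last (x @ [v]) \<noteq> 0" "label_A (x @ [v]) = L" by auto
    have v0: "v \<noteq> 0" using v(3) by simp
    have vst: "low_A x \<le> v" "v \<le> high_A x" using v(1) v0 unfolding children_A_def by auto
    have nr: "\<not> (only_zero_repeats x \<and> v = max_entry x + 1)"
      using only_zero_repeats_snoc_child_A[OF I v(1) v0] v(2) by simp
    have "label_A (x @ [v]) = v + 1 - low_A x"
      using label_A_snoc_child_A[OF I v(1) v0] by (simp only: if_not_P[OF nr])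
    then have "v = ?w" using v(4) vst(1) by simp
    then show "v \<in> (if ?c then {?w} else {})" using vst(2) nr by simp
  next
    fix v assume "v \<in> (if ?c then {?w} else {})"
    then have vw: "v = ?w" and cc: ?c by (auto split: if_splits)
    have v0: "v \<noteq> 0" using vw L s1 by simp
    have "low_A x \<le> v" "v \<le> high_A x" using vw cc L by auto
    then have vin: "v \<in> children_A x" unfolding children_A_def by simp
    have nr: "\<not> (only_zero_repeats x \<and> v = max_entry x + 1)" using cc vw by simp
    have "label_A (x @ [v]) = v + 1 - low_A x"
      using label_A_snoc_child_A[OF I vin v0] by (simp only: if_not_P[OF nr])
    then have "label_A (x @ [v]) = L" using vw L s1 by simp
    then show "v \<in> {v \<in> children_A x. \<not> only_zero_repeats (x @ [v]) \<and> last (x @ [v]) \<noteq> 0 \<and> label_A (x @ [v]) = L}"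
      using vin only_zero_repeats_snoc_child_A[OF I vin v0] nr v0 by simp
  qed
  show ?thesis unfolding eq using label_A_interval_iff[OF I L] by auto
qed

lemma card_children_A_repeat_zero:
  assumes I: "inv_A x"
  shows "card {v \<in> children_A x. \<not> only_zero_repeats (x @ [v]) \<and> last (x @ [v]) = 0} =
    (if \<not> only_zero_repeats x then 1 else 0)"
proof -
  have "{v \<in> children_A x. \<not> only_zero_repeats (x @ [v]) \<and> last (x @ [v]) = 0} = (if only_zero_repeats x then {} else {0})"
  proof (intro set_eqI iffI)
    fix v assume "v \<in> {v \<in> children_A x. \<not> only_zero_repeats (x @ [v]) \<and> last (x @ [v]) = 0}"
    then have v: "v \<in> children_A x" "\<not> only_zero_repeats (x @ [v])" "last (x @ [v]) = 0" by auto
    then have "v = 0" by simp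
    then show "v \<in> (if only_zero_repeats x then {} else {0})" using v by simp
  next
    fix v :: nat assume v: "v \<in> (if only_zero_repeats x then {} else {0})"
    then have "v = 0" "\<not> only_zero_repeats x" by (auto split: if_splits)
    then show "v \<in> {v \<in> children_A x. \<not> only_zero_repeats (x @ [v]) \<and> last (x @ [v]) = 0}"
      unfolding children_A_def by simp
  qed
  then show ?thesis by simp
qed

lemma card_zero_repeats_Suc:
  assumes n: "1 \<le> n"
  shows "card {y \<in> avoiders PA (Suc n). only_zero_repeats y \<and> L \<le> label_A y} =
    card {x \<in> avoiders PA n. only_zero_repeats x \<and> L \<le> 1} +
    card {x \<in> avoiders PA n. only_zero_repeats x \<and> L \<le> label_A x + 1}"
  by (rule A.card_avoiders_Suc_filter_indicators[OF n])
    (rule card_children_A_zero_repeats[OF A.Inv_avoiders[OF n]])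

lemma card_repeat_Suc:
  assumes n: "1 \<le> n" and L: "1 \<le> L"
  shows "card {y \<in> avoiders PA (Suc n). \<not> only_zero_repeats y \<and> last y \<noteq> 0 \<and> label_A y = L} =
    card {x \<in> avoiders PA n. only_zero_repeats x \<and> L + 1 \<le> label_A x} +
    card {x \<in> avoiders PA n. \<not> only_zero_repeats x \<and> last x \<noteq> 0 \<and> L \<le> label_A x}"
  by (rule A.card_avoiders_Suc_filter_indicators[OF n])
    (rule card_children_A_repeat[OF A.Inv_avoiders[OF n] L])

lemma card_repeat_zero_Suc:
  assumes n: "1 \<le> n"
  shows "card {y \<in> avoiders PA (Suc n). \<not> only_zero_repeats y \<and> last y = 0} =
    card {x \<in> avoiders PA n. \<not> only_zero_repeats x}"
  by (rule A.card_avoiders_Suc_filter_indicator[OF n])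
    (rule card_children_A_repeat_zero[OF A.Inv_avoiders[OF n]])

lemma label_A_pos_if_only_zero_repeats:
  "x \<in> avoiders PA n \<Longrightarrow> 1 \<le> n \<Longrightarrow> only_zero_repeats x \<Longrightarrow> 1 \<le> label_A x"
  using label_A_only_zero_repeats(3) A.Inv_avoiders by blast

lemma card_zero_repeats_label_ge:
  assumes n: "1 \<le> n"
  shows "1 \<le> L \<Longrightarrow> card {x \<in> avoiders PA n. only_zero_repeats x \<and> L \<le> label_A x} = (if L \<le> n then 2 ^ (n - L) else 0)"
  using n
proof (induction n arbitrary: L rule: nat_induct_at_least)
  case base
  have c: "avoiders PA 1 = {[0]}" by (rule avoiders_1) simp
  have e: "{x \<in> avoiders PA 1. only_zero_repeats x \<and> L \<le> label_A x} = (if L \<le> 1 then {[0]} else {})"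
    unfolding c using only_zero_repeats_singleton label_A_singleton by auto
  show ?case
  proof (cases "L = 1")
    case True
    then show ?thesis using e by simp
  next
    case False
    then have nl: "\<not> L \<le> 1" using base.prems by simp
    then have e2: "{x \<in> avoiders PA 1. only_zero_repeats x \<and> L \<le> label_A x} = {}" using e by simp
    show ?thesis using nl by (simp only: e2 card.empty) simp
  qed
next
  case (Suc n)
  have rfl: "{x \<in> avoiders PA n. only_zero_repeats x \<and> 1 \<le> label_A x} = {x \<in> avoiders PA n. only_zero_repeats x}"
    using label_A_pos_if_only_zero_repeats[OF _ Suc.hyps] by blast
  have T: "card {x \<in> avoiders PA n. only_zero_repeats x} = 2 ^ (n - 1)"
    using Suc.IH[of 1] Suc.hyps rfl by simp
  note st = card_zero_repeats_Suc[OF Suc.hyps, of L]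
  show ?case
  proof (cases "L = 1")
    case True
    have a: "{x \<in> avoiders PA n. only_zero_repeats x \<and> L \<le> 1} = {x \<in> avoiders PA n. only_zero_repeats x}" using True by simp
    have b: "{x \<in> avoiders PA n. only_zero_repeats x \<and> L \<le> label_A x + 1} = {x \<in> avoiders PA n. only_zero_repeats x}" using True by simp
    have "card {y \<in> avoiders PA (Suc n). only_zero_repeats y \<and> L \<le> label_A y} = 2 * 2 ^ (n - 1)"
      using st a b T by simp
    also have "\<dots> = 2 ^ (Suc n - L)" using True Suc.hyps by (cases n) auto
    finally show ?thesis using True by simp
  next
    case False
    then have L2: "2 \<le> L" using Suc.prems by simp
    have a: "card {x \<in> avoiders PA n. only_zero_repeats x \<and> L \<le> 1} = 0" using L2 by simp
    have b: "{x \<in> avoiders PA n. only_zero_repeats x \<and> L \<le> label_A x + 1} = {x \<in> avoiders PA n. only_zero_repeats x \<and> L - 1 \<le> label_A x}"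
      using L2 by auto
    have "card {y \<in> avoiders PA (Suc n). only_zero_repeats y \<and> L \<le> label_A y} = card {x \<in> avoiders PA n. only_zero_repeats x \<and> L - 1 \<le> label_A x}"
      using st unfolding a b by simp
    also have "\<dots> = (if L - 1 \<le> n then 2 ^ (n - (L - 1)) else 0)" using Suc.IH[of "L - 1"] L2 by simp
    also have "\<dots> = (if L \<le> Suc n then 2 ^ (Suc n - L) else 0)"
    proof -
      have "L - 1 \<le> n \<longleftrightarrow> L \<le> Suc n" using L2 by linarith
      moreover have "n - (L - 1) = Suc n - L" using L2 by linarith
      ultimately show ?thesis by simp
    qed
    finally show ?thesis .
  qed
qed

lemma repeat_count_arith:
  assumes "k \<le> (n::nat)"
  shows "(if k + 1 \<le> n then 2 ^ (n - (k + 1)) else 0) + (n - k - 1) * 2 ^ (n - k - 2) + (n - k - 1) * 2 ^ (n - k - 2)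
     = (n - k) * (2::nat) ^ (n - k - 1)"
proof -
  obtain d where d: "n = k + d" using assms le_Suc_ex by blast
  show ?thesis
  proof (cases d)
    case 0 then show ?thesis using d by simp
  next
    case (Suc e)
    show ?thesis
    proof (cases e)
      case 0 then show ?thesis using d Suc by simp
    next
      case (Suc f)
      have "n - (k + 1) = f + 1" "n - k - 1 = f + 1" "n - k - 2 = f" "n - k = f + 2"
        using d \<open>d = Suc e\<close> Suc by simp_all
      moreover have "k + 1 \<le> n" using d \<open>d = Suc e\<close> by simp
      ultimately show ?thesis by (simp add: algebra_simps)
    qed
  qed
qed

lemma card_repeat_label_ge:
  assumes n: "1 \<le> n"
  shows "1 \<le> L \<Longrightarrow> card {x \<in> avoiders PA n. \<not> only_zero_repeats x \<and> last x \<noteq> 0 \<and> L \<le> label_A x} = (n - L - 1) * 2 ^ (n - L - 2)"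
  using n
proof (induction n arbitrary: L rule: nat_induct_at_least)
  case base
  have c: "avoiders PA 1 = {[0]}" by (rule avoiders_1) simp
  have "{x \<in> avoiders PA 1. \<not> only_zero_repeats x \<and> last x \<noteq> 0 \<and> L \<le> label_A x} = {}"
    using c only_zero_repeats_singleton by auto
  then show ?case by (simp only: card.empty) simp
next
  case (Suc n)
  let ?G = "\<lambda>k. card {x \<in> avoiders PA (Suc n). \<not> only_zero_repeats x \<and> last x \<noteq> 0 \<and> k \<le> label_A x}"
  have zero: "?G k = 0" if k: "Suc n \<le> k" for k
  proof -
    have "\<not> (\<not> only_zero_repeats x \<and> last x \<noteq> 0 \<and> k \<le> label_A x)" if x: "x \<in> avoiders PA (Suc n)" for x
    proof -
      have "last x \<le> n" using avoiders_last_le[OF x] by simp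
      then show ?thesis using label_A_repeat(4)[OF A.Inv_avoiders[OF _ x]] k by fastforce
    qed
    then have "{x \<in> avoiders PA (Suc n). \<not> only_zero_repeats x \<and> last x \<noteq> 0 \<and> k \<le> label_A x} = {}"
      by blast
    then show ?thesis by (simp only: card.empty)
  qed
  show ?case
  proof (cases "Suc n \<le> L")
    case True
    then show ?thesis using zero[OF True] by simp
  next
    case False
    then have Ln: "L \<le> Suc n" by simp
    have "1 \<le> L \<longrightarrow> ?G L = (Suc n - L - 1) * 2 ^ (Suc n - L - 2)"
      using Ln
    proof (induction L rule: inc_induct)
      case base
      show ?case using zero[of "Suc n"] by simp
    next
      case (step k)
      show ?case
      proof
        assume k1: "1 \<le> k"
        have kn: "k \<le> n" using step.hyps by simp
        have "?G k = card {x \<in> avoiders PA (Suc n). \<not> only_zero_repeats x \<and> last x \<noteq> 0 \<and> label_A x = k} + ?G (Suc k)"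
          using card_filter_ge_split[OF finite_avoiders, of PA "Suc n" "\<lambda>x. \<not> only_zero_repeats x \<and> last x \<noteq> 0" k label_A]
          by (simp add: conj_assoc)
        also have "card {x \<in> avoiders PA (Suc n). \<not> only_zero_repeats x \<and> last x \<noteq> 0 \<and> label_A x = k} =
          card {x \<in> avoiders PA n. only_zero_repeats x \<and> k + 1 \<le> label_A x} + card {x \<in> avoiders PA n. \<not> only_zero_repeats x \<and> last x \<noteq> 0 \<and> k \<le> label_A x}"
          by (rule card_repeat_Suc[OF Suc.hyps k1])
        also have "card {x \<in> avoiders PA n. only_zero_repeats x \<and> k + 1 \<le> label_A x} = (if k + 1 \<le> n then 2 ^ (n - (k + 1)) else 0)"
          using card_zero_repeats_label_ge[OF Suc.hyps, of "k + 1"] by simp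
        also have "card {x \<in> avoiders PA n. \<not> only_zero_repeats x \<and> last x \<noteq> 0 \<and> k \<le> label_A x} = (n - k - 1) * 2 ^ (n - k - 2)"
          using Suc.IH[OF k1] .
        also have "?G (Suc k) = (n - k - 1) * 2 ^ (n - k - 2)"
          using step.IH k1 by simp
        also have "(if k + 1 \<le> n then 2 ^ (n - (k + 1)) else 0) + (n - k - 1) * 2 ^ (n - k - 2) + (n - k - 1) * 2 ^ (n - k - 2)
           = (n - k) * (2::nat) ^ (n - k - 1)" by (rule repeat_count_arith[OF kn])
        also have "\<dots> = (Suc n - k - 1) * 2 ^ (Suc n - k - 2)"
          using kn by (simp add: Suc_diff_le)
        finally show "?G k = (Suc n - k - 1) * 2 ^ (Suc n - k - 2)" .
      qed
    qed
    then show ?thesis using Suc.prems by blast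
  qed
qed

lemma card_avoiders_PA_Suc:
  assumes n: "1 \<le> n"
  shows "card (avoiders PA (Suc n)) + 2 ^ (n - 1) = 2 ^ n + (n - 1) * 2 ^ (n - 2) + card (avoiders PA n)"
proof -
  let ?S = "avoiders PA (Suc n)"
  have sn: "1 \<le> Suc n" by simp
  have p1: "card ?S = card {x \<in> ?S. only_zero_repeats x} + card {x \<in> ?S. \<not> only_zero_repeats x}"
    by (rule card_filter_split[OF finite_avoiders])
  have p2: "card {x \<in> ?S. \<not> only_zero_repeats x} = card {x \<in> ?S. \<not> only_zero_repeats x \<and> last x \<noteq> 0} + card {x \<in> ?S. \<not> only_zero_repeats x \<and> last x = 0}"
  proof -
    have "card {x \<in> {x \<in> ?S. \<not> only_zero_repeats x}. last x \<noteq> 0} + card {x \<in> {x \<in> ?S. \<not> only_zero_repeats x}. \<not> last x \<noteq> 0} = card {x \<in> ?S. \<not> only_zero_repeats x}"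
      by (rule card_filter_split[symmetric]) (simp add: finite_avoiders)
    moreover have "{x \<in> {x \<in> ?S. \<not> only_zero_repeats x}. last x \<noteq> 0} = {x \<in> ?S. \<not> only_zero_repeats x \<and> last x \<noteq> 0}" by auto
    moreover have "{x \<in> {x \<in> ?S. \<not> only_zero_repeats x}. \<not> last x \<noteq> 0} = {x \<in> ?S. \<not> only_zero_repeats x \<and> last x = 0}" by auto
    ultimately show ?thesis by simp
  qed
  have T: "card {x \<in> ?S. only_zero_repeats x} = 2 ^ n"
  proof -
    have "{x \<in> ?S. only_zero_repeats x} = {x \<in> ?S. only_zero_repeats x \<and> 1 \<le> label_A x}" using label_A_pos_if_only_zero_repeats[OF _ sn] by blast
    then show ?thesis using card_zero_repeats_label_ge[OF sn, of 1] by simp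
  qed
  have F: "card {x \<in> ?S. \<not> only_zero_repeats x \<and> last x \<noteq> 0} = (n - 1) * 2 ^ (n - 2)"
  proof -
    have "{x \<in> ?S. \<not> only_zero_repeats x \<and> last x \<noteq> 0} = {x \<in> ?S. \<not> only_zero_repeats x \<and> last x \<noteq> 0 \<and> 1 \<le> label_A x}"
      using label_A_repeat(3)[OF A.Inv_avoiders[OF sn]] by blast
    then show ?thesis using card_repeat_label_ge[OF sn, of 1] by simp
  qed
  have D: "card {x \<in> ?S. \<not> only_zero_repeats x \<and> last x = 0} = card {x \<in> avoiders PA n. \<not> only_zero_repeats x}"
    by (rule card_repeat_zero_Suc[OF n])
  have Tn: "card {x \<in> avoiders PA n. only_zero_repeats x} = 2 ^ (n - 1)"
  proof -
    have "{x \<in> avoiders PA n. only_zero_repeats x} = {x \<in> avoiders PA n. only_zero_repeats x \<and> 1 \<le> label_A x}" using label_A_pos_if_only_zero_repeats[OF _ n] by blast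
    then show ?thesis using card_zero_repeats_label_ge[OF n, of 1] n by simp
  qed
  have pn: "card (avoiders PA n) = card {x \<in> avoiders PA n. only_zero_repeats x} + card {x \<in> avoiders PA n. \<not> only_zero_repeats x}"
    by (rule card_filter_split[OF finite_avoiders])
  show ?thesis using p1 p2 T F D Tn pn by simp
qed

lemma card_avoiders_PA: "1 \<le> n \<Longrightarrow> card (avoiders PA n) = closed_form n"
  using eq_closed_form_if_recurrence[of "\<lambda>n. card (avoiders PA n)"]
    card_avoiders_PA_Suc avoiders_1[of PA] by simp

theorem theorem3p2:
  fixes n :: nat
  assumes "n \<ge> 1"
  shows "a_count {[0,1,0,1], [0,1,1,2]} n = a_count {[0,1,0,2], [0,1,1,2]} n
    \<and> a_count {[0,1,0,2], [0,1,1,2]} n = a_count {[0,1,2,1], [0,1,1,2]} n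
    \<and> a_count {[0,1,2,1], [0,1,1,2]} n = a_count {[0,1,0,2], [0,1,2,0]} n
    \<and> int (a_count {[0,1,0,2], [0,1,2,0]} n) = (int n - 1) * 2 ^ (n - 2) + 1"
proof -
  have "a_count PA n = closed_form n" using card_avoiders_PA[OF assms] by (simp add: a_count_eq_card_avoiders)
  moreover have "a_count PB n = closed_form n" using card_avoiders_PB[OF assms] by (simp add: a_count_eq_card_avoiders)
  moreover have "a_count PC n = closed_form n"
    using C.card_avoiders_eq_closed_form[OF assms] by (simp add: a_count_eq_card_avoiders)
  moreover have "a_count PD n = closed_form n"
    using D.card_avoiders_eq_closed_form[OF assms] by (simp add: a_count_eq_card_avoiders)
  ultimately show ?thesis using int_closed_form[OF assms] by simp
qed

end
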